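(* Let $N\ge3$, $G\in\mathcal G_3(N)$ and $u\in V(G)$. Then $u$ is not a leaf of $G$ if and only if $c(G|s)=\infty$ for every state $s=(x^1,\dots,x^{N-1},u,N)\in S^N\cap S_{nc}$ (robber on $u$, robber to move).
   Context: Board and moves: $G=(V,E)$ finite, simple, connected, undirected. There are $N\ge3$ tokens, cops $C_1,\dots,C_{N-1}$ (tokens $1,\dots,N-1$) and robber $R$ (token $N$). A state is $s=(x^1,\dots,x^N,n)$ with $x^i\in V$ the position of token $i$ and $n$ the token to move; $S^n$ is the set of states with token $n$ to move; $s$ is a capture state if $x^i=x^N$ for some $i\le N-1$, and $S_{nc}$ is the set of noncapture states. In each turn the token to move moves to a vertex of its closed neighbourhood (may stay put); order $C_1,\dots,C_{N-1},R,C_1,\dots$; the game ends at the first capture. The modified cops-and-robber (CR) game is the two-player zero-sum game where one player controls all cops, the other the robber, and if capture occurs at time $t$ (number of turns) the robber's payoff is $-\gamma^t$ ($0$ if never), $\gamma\in(0,1)$. $\widehat\Sigma^n$ denotes the set of pure positional strategies of token $n$ that are components of optimal strategies in this game (CR-optimal strategies). For $s\in S_{nc}$, whenever CR-optimal play from $s$ leads to capture, it is always the same cop, denoted $\widehat C(s)$, that effects it. State cop number. For $s\in S_{nc}$, $c(G|s)=c_N(G|s)$ is the minimum $k\in\{1,\dots,N-1\}$ for which there exist $k$ cops and strategies for them such that, starting from $s$, a capture (by any cop) occurs whatever the other $N-k$ tokens (including $R$) do; $c(G|s)=\infty$ if no such $k$ exists. $c(G)$ is the classical cop number of $G$. Graph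 classes. $\mathcal G(N)=\{G: c(G)>N-1\}$; $\mathcal G_1(N)=\{G\in\mathcal G(N):\exists s\in S_{nc}\text{ with } c(G|s)\in\{2,\dots,N-1\}\}$; $\mathcal G_1'(N)=\mathcal G(N)\setminus\mathcal G_1(N)$; $\mathcal G_2(N)=\{G\in\mathcal G(N): c(G|s)=\infty\text{ for all } s\in S^N\cap S_{nc}\}$; $\mathcal G_2'(N)=\mathcal G_1'(N)\setminus\mathcal G_2(N)$. Say that a state $s\in S_{nc}$ with $c(G|s)=1$ and $\widehat C(s)=C_m$ has the sure-capture property if for every $\widehat\sigma^m\in\widehat\Sigma^m$ and every strategy profile $\sigma^{-m}$ of the other tokens, play from $s$ under $(\widehat\sigma^m,\sigma^{-m})$ ends in a capture in which $C_m$ is on the robber's vertex. $\mathcal G_3(N)$ is the set of $G\in\mathcal G_2'(N)$ in which every $s\in S_{nc}$ with $c(G|s)=1$ has the sure-capture property. *)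

theory Defs
  imports Main "HOL-Library.Extended_Nat"
begin

definition simple_conn_graph :: "'v set \<Rightarrow> ('v \<Rightarrow> 'v \<Rightarrow> bool) \<Rightarrow> bool" where
  "simple_conn_graph V E \<longleftrightarrow> finite V \<and> V \<noteq> {} \<and>
     (\<forall>x y. E x y \<longrightarrow> x \<in> V \<and> y \<in> V) \<and>
     (\<forall>x y. E x y \<longrightarrow> E y x) \<and> (\<forall>x. \<not> E x x) \<and>
     (\<forall>x\<in>V. \<forall>y\<in>V. E\<^sup>*\<^sup>* x y)"

definition cnbhd :: "('v \<Rightarrow> 'v \<Rightarrow> bool) \<Rightarrow> 'v \<Rightarrow> 'v set" where
  "cnbhd E x = insert x {y. E x y}"

definition is_leaf :: "('v \<Rightarrow> 'v \<Rightarrow> bool) \<Rightarrow> 'v \<Rightarrow> bool" where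
  "is_leaf E u \<longleftrightarrow> card {v. E u v} = 1"

text \<open>k cops: cops place first (c0), the robber then places anywhere, then alternately all
  cops move simultaneously (history dependent strategy sigma) and the robber moves.\<close>

definition cops_win :: "'v set \<Rightarrow> ('v \<Rightarrow> 'v \<Rightarrow> bool) \<Rightarrow> nat \<Rightarrow> bool" where
  "cops_win V E k \<longleftrightarrow>
    (\<exists>c0 (\<sigma> :: ('v list \<times> 'v) list \<Rightarrow> 'v list).
       length c0 = k \<and> set c0 \<subseteq> V \<and>
       (\<forall>h. h \<noteq> [] \<longrightarrow> length (\<sigma> h) = length (fst (last h)) \<and>
             (\<forall>i < length (\<sigma> h). \<sigma> h ! i \<in> cnbhd E (fst (last h) ! i))) \<and>
       (\<forall>q :: nat \<Rightarrow> 'v list \<times> 'v.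
          fst (q 0) = c0 \<and> snd (q 0) \<in> V \<and>
          (\<forall>t. fst (q (Suc t)) = \<sigma> (map q [0..<Suc t]) \<and>
               snd (q (Suc t)) \<in> cnbhd E (snd (q t)))
          \<longrightarrow> (\<exists>t. snd (q t) \<in> set (fst (q t)) \<or> snd (q t) \<in> set (fst (q (Suc t))))))"

definition cop_number :: "'v set \<Rightarrow> ('v \<Rightarrow> 'v \<Rightarrow> bool) \<Rightarrow> nat" where
  "cop_number V E = (LEAST k. cops_win V E k)"

text \<open>A state is (xs, n): xs ! (i-1) is the position of token i (i = 1..N), n the token to move.
  Tokens 1..N-1 are the cops, token N is the robber.\<close>

type_synonym 'v state = "'v list \<times> nat"

definition pos :: "'v state \<Rightarrow> nat \<Rightarrow> 'v" where
  "pos s i = fst s ! (i - 1)"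

definition turn :: "'v state \<Rightarrow> nat" where
  "turn s = snd s"

definition valid_state :: "'v set \<Rightarrow> nat \<Rightarrow> 'v state \<Rightarrow> bool" where
  "valid_state V N s \<longleftrightarrow> length (fst s) = N \<and> set (fst s) \<subseteq> V \<and> snd s \<in> {1..N}"

definition is_capture :: "nat \<Rightarrow> 'v state \<Rightarrow> bool" where
  "is_capture N s \<longleftrightarrow> (\<exists>i\<in>{1..N-1}. pos s i = pos s N)"

definition S_nc :: "'v set \<Rightarrow> nat \<Rightarrow> 'v state set" where
  "S_nc V N = {s. valid_state V N s \<and> \<not> is_capture N s}"

definition S_turn :: "'v set \<Rightarrow> nat \<Rightarrow> nat \<Rightarrow> 'v state set" where
  "S_turn V N n = {s. valid_state V N s \<and> turn s = n}"

definition nxt :: "nat \<Rightarrow> nat \<Rightarrow> nat" where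
  "nxt N n = n mod N + 1"

definition move :: "nat \<Rightarrow> 'v state \<Rightarrow> 'v \<Rightarrow> 'v state" where
  "move N s y = ((fst s)[turn s - 1 := y], nxt N (turn s))"

text \<open>The cops in K (using history dependent strategies) force a capture from s against every
  behaviour of the other tokens.\<close>

definition can_force :: "'v set \<Rightarrow> ('v \<Rightarrow> 'v \<Rightarrow> bool) \<Rightarrow> nat \<Rightarrow> 'v state \<Rightarrow> nat set \<Rightarrow> bool" where
  "can_force V E N s K \<longleftrightarrow>
    (\<exists>\<sigma> :: 'v state list \<Rightarrow> 'v.
       (\<forall>h. h \<noteq> [] \<longrightarrow> \<sigma> h \<in> cnbhd E (pos (last h) (turn (last h)))) \<and>
       (\<forall>p :: nat \<Rightarrow> 'v state.
          p 0 = s \<and>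
          (\<forall>t. \<exists>y. y \<in> cnbhd E (pos (p t) (turn (p t))) \<and> p (Suc t) = move N (p t) y \<and>
                  (turn (p t) \<in> K \<longrightarrow> y = \<sigma> (map p [0..<Suc t])))
          \<longrightarrow> (\<exists>t. is_capture N (p t))))"

definition k_cops_force :: "'v set \<Rightarrow> ('v \<Rightarrow> 'v \<Rightarrow> bool) \<Rightarrow> nat \<Rightarrow> 'v state \<Rightarrow> nat \<Rightarrow> bool" where
  "k_cops_force V E N s k \<longleftrightarrow> k \<in> {1..N-1} \<and>
     (\<exists>K. K \<subseteq> {1..N-1} \<and> card K = k \<and> can_force V E N s K)"

definition state_cop_num :: "'v set \<Rightarrow> ('v \<Rightarrow> 'v \<Rightarrow> bool) \<Rightarrow> nat \<Rightarrow> 'v state \<Rightarrow> enat" where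
  "state_cop_num V E N s =
     (if \<exists>k. k_cops_force V E N s k then enat (LEAST k. k_cops_force V E N s k) else \<infinity>)"

definition legal_strat :: "'v set \<Rightarrow> ('v \<Rightarrow> 'v \<Rightarrow> bool) \<Rightarrow> nat \<Rightarrow> ('v state \<Rightarrow> 'v) \<Rightarrow> bool" where
  "legal_strat V E N \<sigma> \<longleftrightarrow> (\<forall>s. valid_state V N s \<longrightarrow> \<sigma> s \<in> cnbhd E (pos s (turn s)))"

primrec play :: "nat \<Rightarrow> ('v state \<Rightarrow> 'v) \<Rightarrow> 'v state \<Rightarrow> nat \<Rightarrow> 'v state" where
  "play N \<sigma> s 0 = s"
| "play N \<sigma> s (Suc t) = move N (play N \<sigma> s t) (\<sigma> (play N \<sigma> s t))"

definition robber_payoff :: "nat \<Rightarrow> real \<Rightarrow> ('v state \<Rightarrow> 'v) \<Rightarrow> 'v state \<Rightarrow> real" where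
  "robber_payoff N \<gamma> \<sigma> s =
     (if \<exists>t. is_capture N (play N \<sigma> s t)
      then - (\<gamma> ^ (LEAST t. is_capture N (play N \<sigma> s t))) else 0)"

definition mix :: "nat set \<Rightarrow> ('v state \<Rightarrow> 'v) \<Rightarrow> ('v state \<Rightarrow> 'v) \<Rightarrow> 'v state \<Rightarrow> 'v" where
  "mix P \<sigma> \<tau> = (\<lambda>s. if turn s \<in> P then \<sigma> s else \<tau> s)"

text \<open>Optimal (saddle point, from every state) profiles: robber (token N) maximises, the cops
  (tokens 1..N-1, one player) minimise the robber payoff.\<close>

definition CR_optimal :: "'v set \<Rightarrow> ('v \<Rightarrow> 'v \<Rightarrow> bool) \<Rightarrow> nat \<Rightarrow> real \<Rightarrow> ('v state \<Rightarrow> 'v) \<Rightarrow> bool" where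
  "CR_optimal V E N \<gamma> \<sigma> \<longleftrightarrow> legal_strat V E N \<sigma> \<and>
     (\<forall>s. valid_state V N s \<longrightarrow>
        (\<forall>\<tau>. legal_strat V E N \<tau> \<longrightarrow>
           robber_payoff N \<gamma> (mix {N} \<tau> \<sigma>) s \<le> robber_payoff N \<gamma> \<sigma> s \<and>
           robber_payoff N \<gamma> \<sigma> s \<le> robber_payoff N \<gamma> (mix {N} \<sigma> \<tau>) s))"

text \<open>hat Sigma^m: positional strategies of token m (only values on states with m to move
  matter) that are components of CR-optimal profiles.\<close>

definition hat_Sigma :: "'v set \<Rightarrow> ('v \<Rightarrow> 'v \<Rightarrow> bool) \<Rightarrow> nat \<Rightarrow> real \<Rightarrow> nat \<Rightarrow> ('v state \<Rightarrow> 'v) set" where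
  "hat_Sigma V E N \<gamma> m = {\<sigma>m. \<exists>\<sigma>. CR_optimal V E N \<gamma> \<sigma> \<and>
       (\<forall>s. valid_state V N s \<and> turn s = m \<longrightarrow> \<sigma>m s = \<sigma> s)}"

text \<open>hat C(s) = C_m: CR-optimal play from s ends in a capture effected by cop m
  (m made the capturing move).\<close>

definition hat_C :: "'v set \<Rightarrow> ('v \<Rightarrow> 'v \<Rightarrow> bool) \<Rightarrow> nat \<Rightarrow> real \<Rightarrow> 'v state \<Rightarrow> nat \<Rightarrow> bool" where
  "hat_C V E N \<gamma> s m \<longleftrightarrow> m \<in> {1..N-1} \<and>
     (\<exists>\<sigma> t. CR_optimal V E N \<gamma> \<sigma> \<and> 0 < t \<and> is_capture N (play N \<sigma> s t) \<and>
        (\<forall>t'<t. \<not> is_capture N (play N \<sigma> s t')) \<and> turn (play N \<sigma> s (t - 1)) = m)"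

definition sure_capture :: "'v set \<Rightarrow> ('v \<Rightarrow> 'v \<Rightarrow> bool) \<Rightarrow> nat \<Rightarrow> real \<Rightarrow> 'v state \<Rightarrow> bool" where
  "sure_capture V E N \<gamma> s \<longleftrightarrow>
     (\<forall>m. hat_C V E N \<gamma> s m \<longrightarrow>
        (\<forall>\<sigma>m \<in> hat_Sigma V E N \<gamma> m. \<forall>\<tau>. legal_strat V E N \<tau> \<longrightarrow>
           (\<exists>t. is_capture N (play N (mix {m} \<sigma>m \<tau>) s t) \<and>
                (\<forall>t'<t. \<not> is_capture N (play N (mix {m} \<sigma>m \<tau>) s t')) \<and>
                pos (play N (mix {m} \<sigma>m \<tau>) s t) m = pos (play N (mix {m} \<sigma>m \<tau>) s t) N)))"

definition in_G :: "'v set \<Rightarrow> ('v \<Rightarrow> 'v \<Rightarrow> bool) \<Rightarrow> nat \<Rightarrow> bool" where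
  "in_G V E N \<longleftrightarrow> cop_number V E > N - 1"

definition in_G1 :: "'v set \<Rightarrow> ('v \<Rightarrow> 'v \<Rightarrow> bool) \<Rightarrow> nat \<Rightarrow> bool" where
  "in_G1 V E N \<longleftrightarrow> in_G V E N \<and>
     (\<exists>s \<in> S_nc V N. state_cop_num V E N s \<in> enat ` {2..N-1})"

definition in_G1' :: "'v set \<Rightarrow> ('v \<Rightarrow> 'v \<Rightarrow> bool) \<Rightarrow> nat \<Rightarrow> bool" where
  "in_G1' V E N \<longleftrightarrow> in_G V E N \<and> \<not> in_G1 V E N"

definition in_G2 :: "'v set \<Rightarrow> ('v \<Rightarrow> 'v \<Rightarrow> bool) \<Rightarrow> nat \<Rightarrow> bool" where
  "in_G2 V E N \<longleftrightarrow> in_G V E N \<and>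
     (\<forall>s \<in> S_turn V N N \<inter> S_nc V N. state_cop_num V E N s = \<infinity>)"

definition in_G2' :: "'v set \<Rightarrow> ('v \<Rightarrow> 'v \<Rightarrow> bool) \<Rightarrow> nat \<Rightarrow> bool" where
  "in_G2' V E N \<longleftrightarrow> in_G1' V E N \<and> \<not> in_G2 V E N"

definition in_G3 :: "'v set \<Rightarrow> ('v \<Rightarrow> 'v \<Rightarrow> bool) \<Rightarrow> nat \<Rightarrow> real \<Rightarrow> bool" where
  "in_G3 V E N \<gamma> \<longleftrightarrow> in_G2' V E N \<and>
     (\<forall>s \<in> S_nc V N. state_cop_num V E N s = 1 \<longrightarrow> sure_capture V E N \<gamma> s)"

end

theory Submission
  imports Defs
begin

text \<open>
  If u is a leaf with neighbour w, a single cop on w catches a robber on u.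

  Now let u be a non-leaf and suppose a state with the robber on u and to move had a finite state
  cop number. As G is not in the class G1(N), that number is 1: a single cop m forces a capture
  within some bound n, i.e. the state lies in the n-th attractor of m. By induction on n, the robber
  is trapped: every vertex it can move to is next to cop m, occupied by a cop, or a leaf. Otherwise
  it steps to a free non-leaf out of reach of m and, the other cops standing still, is back in the
  same situation one round later with bound n - N.

  In a trap, cop m alone captures (a robber fleeing to a leaf is cornered there), so the state has
  cop number 1 and the sure-capture property applies. Since u is not a leaf it has a second
  neighbour besides the position of m; put another cop there (possible as N \<ge> 3). Under CR-optimal
  play (which exists by the attractor construction for all cops) capture occurs and is effected by
  a cop, never by the robber moving onto one. But the robber may then move onto the cop that is not
  the designated one, and the resulting capture violates the sure-capture property.
\<close>

lemma simple_conn_graph_sym: "simple_conn_graph V E \<Longrightarrow> E a b \<Longrightarrow> E b a"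
  unfolding simple_conn_graph_def by blast

lemma simple_conn_graph_irrefl: "simple_conn_graph V E \<Longrightarrow> E a b \<Longrightarrow> a \<noteq> b"
  unfolding simple_conn_graph_def by blast

lemma simple_conn_graph_edge_in_V: "simple_conn_graph V E \<Longrightarrow> E a b \<Longrightarrow> a \<in> V \<and> b \<in> V"
  unfolding simple_conn_graph_def by blast

lemma cnbhd_self [simp]: "x \<in> cnbhd E x"
  unfolding cnbhd_def by simp

lemma cnbhd_subset_V: "simple_conn_graph V E \<Longrightarrow> x \<in> V \<Longrightarrow> cnbhd E x \<subseteq> V"
  unfolding simple_conn_graph_def cnbhd_def by blast

lemma finite_cnbhd: "simple_conn_graph V E \<Longrightarrow> finite (cnbhd E x)"
proof -
  assume "simple_conn_graph V E"
  then have "{y. E x y} \<subseteq> V" "finite V"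
    unfolding simple_conn_graph_def by blast+
  then show ?thesis
    unfolding cnbhd_def by (simp add: finite_subset)
qed

lemma leaf_cnbhd:
  assumes "is_leaf E y" and "E y u"
  shows "cnbhd E y = {y, u}"
proof -
  obtain a where "{v. E y v} = {a}"
    using assms(1) card_1_singletonE unfolding is_leaf_def by blast
  with assms(2) show ?thesis
    unfolding cnbhd_def by auto
qed

lemma leaf_neighbour:
  assumes "is_leaf E u"
  obtains w where "E u w" and "cnbhd E u = {u, w}"
proof -
  obtain w where "{v. E u v} = {w}"
    using assms card_1_singletonE unfolding is_leaf_def by blast
  then show ?thesis
    using that unfolding cnbhd_def by auto
qed

lemma non_leaf_second_neighbour:
  assumes "\<not> is_leaf E u" and "E u w"
  obtains v where "E u v" and "v \<noteq> w"
proof -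
  have "{v. E u v} \<noteq> {w}"
    using assms(1) unfolding is_leaf_def by auto
  then show ?thesis
    using assms(2) that by blast
qed

lemma turn_move [simp]: "turn (move N s y) = nxt N (turn s)"
  unfolding move_def turn_def by simp

lemma fst_move: "fst (move N s y) = (fst s)[turn s - 1 := y]"
  unfolding move_def by simp

lemma pos_move:
  assumes "1 \<le> i" "i \<le> length (fst s)" "1 \<le> turn s" "turn s \<le> length (fst s)"
  shows "pos (move N s y) i = (if i = turn s then y else pos s i)"
  using assms unfolding pos_def fst_move by (auto simp: nth_list_update)

lemma pos_move_mover: "valid_state V N q \<Longrightarrow> pos (move N q y) (turn q) = y"
  using pos_move[of "turn q" q] unfolding valid_state_def turn_def by auto

lemma nxt_in_range: "0 < N \<Longrightarrow> nxt N n \<in> {1..N}"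
  unfolding nxt_def by (simp add: Suc_leI)

lemma valid_state_pos: "valid_state V N s \<Longrightarrow> i \<in> {1..N} \<Longrightarrow> pos s i \<in> V"
  unfolding valid_state_def pos_def by (auto intro!: nth_mem[THEN subsetD[rotated]])

lemma valid_state_turn: "valid_state V N s \<Longrightarrow> turn s \<in> {1..N}"
  unfolding valid_state_def turn_def by simp

lemma valid_state_move:
  assumes "simple_conn_graph V E" "valid_state V N s" "y \<in> cnbhd E (pos s (turn s))"
  shows "valid_state V N (move N s y)"
proof -
  have "y \<in> V"
    using cnbhd_subset_V[OF assms(1) valid_state_pos[OF assms(2) valid_state_turn[OF assms(2)]]]
      assms(3) by blast
  then show ?thesis
    using assms(2) nxt_in_range[of N] unfolding valid_state_def move_def
    by (auto dest: set_update_subset_insert[THEN subsetD])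
qed

lemma capture_iff_fst: "fst q = fst q' \<Longrightarrow> is_capture N q \<longleftrightarrow> is_capture N q'"
  unfolding is_capture_def pos_def by simp

lemma captureI: "i \<in> {1..N-1} \<Longrightarrow> pos q i = pos q N \<Longrightarrow> is_capture N q"
  unfolding is_capture_def by blast

lemma legal_strat_mix: "legal_strat V E N \<sigma> \<Longrightarrow> legal_strat V E N \<tau> \<Longrightarrow> legal_strat V E N (mix P \<sigma> \<tau>)"
  unfolding legal_strat_def mix_def by simp

lemma valid_state_play:
  assumes "simple_conn_graph V E" "valid_state V N s" "legal_strat V E N \<rho>"
  shows "valid_state V N (play N \<rho> s t)"
proof (induction t)
  case (Suc t)
  then have "\<rho> (play N \<rho> s t) \<in> cnbhd E (pos (play N \<rho> s t) (turn (play N \<rho> s t)))"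
    using assms(3) unfolding legal_strat_def by blast
  then show ?case
    using valid_state_move[OF assms(1) Suc] by simp
qed (simp add: assms)

lemma play_history_exists:
  "\<exists>p. p 0 = s \<and> (\<forall>t. p (Suc t) = move N (p t) (ch (map p [0..<Suc t])))"
proof -
  define H where "H = rec_nat [s] (\<lambda>_ h. h @ [move N (last h) (ch h)])"
  define p where "p t = last (H t)" for t
  have H_Suc: "H (Suc t) = H t @ [move N (p t) (ch (H t))]" for t
    unfolding H_def p_def by simp
  have "H t = map p [0..<Suc t]" for t
  proof (induction t)
    case 0
    then show ?case by (simp add: H_def p_def)
  next
    case (Suc t)
    then show ?case
      using H_Suc[of t] by (simp add: p_def)
  qed
  then show ?thesis
    using H_Suc by (intro exI[of _ p]) (simp add: p_def H_def)
qed

lemma robber_payoff_first_capture: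
  assumes "is_capture N (play N \<rho> s t)" "\<forall>t'<t. \<not> is_capture N (play N \<rho> s t')"
  shows "robber_payoff N \<gamma> \<rho> s = - (\<gamma> ^ t)"
proof -
  have "(LEAST t. is_capture N (play N \<rho> s t)) = t"
    using assms by (metis Least_equality not_le_imp_less)
  then show ?thesis
    using assms unfolding robber_payoff_def by auto
qed

lemma robber_payoff_no_capture:
  "\<forall>t. \<not> is_capture N (play N \<rho> s t) \<Longrightarrow> robber_payoff N \<gamma> \<rho> s = 0"
  unfolding robber_payoff_def by auto

lemma first_capture:
  assumes "is_capture N (play N \<rho> s t0)"
  obtains t where "is_capture N (play N \<rho> s t)" "\<forall>t'<t. \<not> is_capture N (play N \<rho> s t')"
    "t \<le> t0" "robber_payoff N \<gamma> \<rho> s = - (\<gamma> ^ t)"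
proof -
  define t where "t = (LEAST t. is_capture N (play N \<rho> s t))"
  have "is_capture N (play N \<rho> s t)" "t \<le> t0"
    using assms LeastI Least_le t_def by metis+
  moreover have "\<forall>t'<t. \<not> is_capture N (play N \<rho> s t')"
    using not_less_Least t_def by blast
  ultimately show ?thesis
    using that robber_payoff_first_capture by blast
qed

subsection \<open>Attractors\<close>

primrec attractor :: "('v \<Rightarrow> 'v \<Rightarrow> bool) \<Rightarrow> nat \<Rightarrow> nat set \<Rightarrow> nat \<Rightarrow> 'v state set" where
  "attractor E N K 0 = {s. is_capture N s}"
| "attractor E N K (Suc n) = attractor E N K n \<union> {s.
     (turn s \<in> K \<and> (\<exists>y\<in>cnbhd E (pos s (turn s)). move N s y \<in> attractor E N K n)) \<or>
     (turn s \<notin> K \<and> (\<forall>y\<in>cnbhd E (pos s (turn s)). move N s y \<in> attractor E N K n))}"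

definition forcing_region :: "('v \<Rightarrow> 'v \<Rightarrow> bool) \<Rightarrow> nat \<Rightarrow> nat set \<Rightarrow> 'v state set" where
  "forcing_region E N K = (\<Union>n. attractor E N K n)"

lemma forcing_regionI: "s \<in> attractor E N K n \<Longrightarrow> s \<in> forcing_region E N K"
  unfolding forcing_region_def by (rule UN_I[OF UNIV_I])

lemma capture_in_forcing_region: "is_capture N s \<Longrightarrow> s \<in> forcing_region E N K"
  by (rule forcing_regionI[of _ _ _ _ 0]) simp

lemma attractor_Suc_mono: "s \<in> attractor E N K n \<Longrightarrow> s \<in> attractor E N K (Suc n)"
  by simp

lemma attractor_mono: "n \<le> n' \<Longrightarrow> attractor E N K n \<subseteq> attractor E N K n'"
  by (rule lift_Suc_mono_le[of "attractor E N K"]) auto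

lemma attractor_not_capture: "s \<in> attractor E N K n \<Longrightarrow> \<not> is_capture N s \<Longrightarrow> 0 < n"
  by (rule ccontr) simp

lemma attractor_coalition_step:
  "turn s \<in> K \<Longrightarrow> y \<in> cnbhd E (pos s (turn s)) \<Longrightarrow> move N s y \<in> attractor E N K n
   \<Longrightarrow> s \<in> attractor E N K (Suc n)"
  by auto

lemma attractor_opponent_step:
  "turn s \<notin> K \<Longrightarrow> \<forall>y\<in>cnbhd E (pos s (turn s)). move N s y \<in> attractor E N K n
   \<Longrightarrow> s \<in> attractor E N K (Suc n)"
  by auto

lemma attractor_opponent_move:
  "s \<in> attractor E N K (Suc n) \<Longrightarrow> \<not> is_capture N s \<Longrightarrow> turn s \<notin> K
   \<Longrightarrow> y \<in> cnbhd E (pos s (turn s)) \<Longrightarrow> move N s y \<in> attractor E N K n"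
proof (induction n arbitrary: s)
  case (Suc n)
  then consider "s \<in> attractor E N K (Suc n)"
    | "\<forall>y\<in>cnbhd E (pos s (turn s)). move N s y \<in> attractor E N K (Suc n)"
    unfolding attractor.simps(2)[of E N K "Suc n"] by blast
  then show ?case
  proof cases
    case 1
    then show ?thesis
      using Suc attractor_Suc_mono by blast
  qed (use Suc in blast)
qed auto

lemma attractor_coalition_move:
  "s \<in> attractor E N K (Suc n) \<Longrightarrow> \<not> is_capture N s \<Longrightarrow> turn s \<in> K
   \<Longrightarrow> \<exists>y\<in>cnbhd E (pos s (turn s)). move N s y \<in> attractor E N K n"
proof (induction n arbitrary: s)
  case (Suc n)
  then consider "s \<in> attractor E N K (Suc n)"
    | "\<exists>y\<in>cnbhd E (pos s (turn s)). move N s y \<in> attractor E N K (Suc n)"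
    unfolding attractor.simps(2)[of E N K "Suc n"] by blast
  then show ?case
  proof cases
    case 1
    then show ?thesis
      using Suc attractor_Suc_mono by blast
  qed blast
qed auto

lemma finite_in_forcing_region:
  assumes "finite Y" "\<forall>y\<in>Y. g y \<in> forcing_region E N K"
  shows "\<exists>n. \<forall>y\<in>Y. g y \<in> attractor E N K n"
proof -
  obtain f where f: "\<forall>y\<in>Y. g y \<in> attractor E N K (f y)"
    using bchoice[of Y "\<lambda>y n. g y \<in> attractor E N K n"] assms(2)
    unfolding forcing_region_def by blast
  have "\<forall>y\<in>Y. g y \<in> attractor E N K (\<Sum>y\<in>Y. f y)"
    using f attractor_mono[OF member_le_sum[OF _ _ assms(1)]] by blast
  then show ?thesis by blast
qed

lemma opponent_escape:
  assumes "finite (cnbhd E (pos s (turn s)))" "turn s \<notin> K" "s \<notin> forcing_region E N K"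
  shows "\<exists>y\<in>cnbhd E (pos s (turn s)). move N s y \<notin> forcing_region E N K"
proof (rule ccontr)
  assume "\<not> ?thesis"
  then obtain n where "\<forall>y\<in>cnbhd E (pos s (turn s)). move N s y \<in> attractor E N K n"
    using finite_in_forcing_region[OF assms(1)] by blast
  then have "s \<in> attractor E N K (Suc n)"
    by (rule attractor_opponent_step[OF assms(2)])
  then show False
    using assms(3) unfolding forcing_region_def by blast
qed

lemma coalition_cannot_enter:
  assumes "turn s \<in> K" "s \<notin> forcing_region E N K" "y \<in> cnbhd E (pos s (turn s))"
  shows "move N s y \<notin> forcing_region E N K"
proof
  assume "move N s y \<in> forcing_region E N K"
  then obtain n where "move N s y \<in> attractor E N K n"
    unfolding forcing_region_def by blast
  then have "s \<in> attractor E N K (Suc n)"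
    by (rule attractor_coalition_step[OF assms(1,3)])
  then show False
    using assms(2) unfolding forcing_region_def by blast
qed

text \<open>Outside the forcing region of K, the opponents of K can stay outside against any history
  dependent strategy of K, since finite branching lets them always pick a move out of it.\<close>

lemma escape_from_forcing_region:
  assumes fin: "\<forall>x. finite (cnbhd E x)" and s: "s \<notin> forcing_region E N K"
    and \<sigma>: "\<forall>h. h \<noteq> [] \<longrightarrow> \<sigma> h \<in> cnbhd E (pos (last h) (turn (last h)))"
  shows "\<exists>p. p 0 = s \<and> (\<forall>t. p t \<notin> forcing_region E N K) \<and>
    (\<forall>t. \<exists>y. y \<in> cnbhd E (pos (p t) (turn (p t))) \<and> p (Suc t) = move N (p t) y \<and>
              (turn (p t) \<in> K \<longrightarrow> y = \<sigma> (map p [0..<Suc t])))"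
proof -
  define escape where "escape q = (SOME y. y \<in> cnbhd E (pos q (turn q)) \<and>
      move N q y \<notin> forcing_region E N K)" for q
  define ch where "ch h = (if turn (last h) \<in> K then \<sigma> h else escape (last h))" for h
  obtain p where p0: "p 0 = s" and p_Suc: "\<And>t. p (Suc t) = move N (p t) (ch (map p [0..<Suc t]))"
    using play_history_exists by blast
  have last_history: "last (map p [0..<Suc t]) = p t" for t
    by (simp del: upt_Suc add: last_map)
  have ch_p: "ch (map p [0..<Suc t]) = (if turn (p t) \<in> K then \<sigma> (map p [0..<Suc t]) else escape (p t))"
    for t unfolding ch_def last_history ..
  have step: "ch (map p [0..<Suc t]) \<in> cnbhd E (pos (p t) (turn (p t))) \<and>
      p (Suc t) \<notin> forcing_region E N K"
    if "p t \<notin> forcing_region E N K" for t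
  proof (cases "turn (p t) \<in> K")
    case True
    then show ?thesis
      using \<sigma>[rule_format, of "map p [0..<Suc t]"] coalition_cannot_enter[OF True that]
        last_history
      by (simp add: p_Suc ch_p del: upt_Suc)
  next
    case False
    then have "\<exists>y. y \<in> cnbhd E (pos (p t) (turn (p t))) \<and> move N (p t) y \<notin> forcing_region E N K"
      using opponent_escape[OF fin[rule_format] False that] by blast
    then show ?thesis
      using someI_ex False
      by (simp add: p_Suc ch_p escape_def del: upt_Suc)
  qed
  have outside: "p t \<notin> forcing_region E N K" for t
  proof (induction t)
    case (Suc t)
    then show ?case
      using step by blast
  qed (simp add: s p0)
  moreover have "\<exists>y. y \<in> cnbhd E (pos (p t) (turn (p t))) \<and> p (Suc t) = move N (p t) y \<and>
      (turn (p t) \<in> K \<longrightarrow> y = \<sigma> (map p [0..<Suc t]))" for t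
  proof (intro exI conjI)
    show "ch (map p [0..<Suc t]) \<in> cnbhd E (pos (p t) (turn (p t)))"
      using step[OF outside] by blast
    show "turn (p t) \<in> K \<longrightarrow> ch (map p [0..<Suc t]) = \<sigma> (map p [0..<Suc t])"
      using ch_p by (simp del: upt_Suc)
  qed (rule p_Suc)
  ultimately show ?thesis
    using p0 by blast
qed

lemma can_force_in_forcing_region:
  assumes fin: "\<forall>x. finite (cnbhd E x)" and force: "can_force V E N s K"
  shows "s \<in> forcing_region E N K"
proof (rule ccontr)
  assume s: "s \<notin> forcing_region E N K"
  obtain \<sigma> where \<sigma>_legal: "\<forall>h. h \<noteq> [] \<longrightarrow> \<sigma> h \<in> cnbhd E (pos (last h) (turn (last h)))"
    and \<sigma>_wins: "\<forall>p. p 0 = s \<and>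
          (\<forall>t. \<exists>y. y \<in> cnbhd E (pos (p t) (turn (p t))) \<and> p (Suc t) = move N (p t) y \<and>
                  (turn (p t) \<in> K \<longrightarrow> y = \<sigma> (map p [0..<Suc t])))
          \<longrightarrow> (\<exists>t. is_capture N (p t))"
    using force unfolding can_force_def by blast
  obtain p where p: "p 0 = s" "\<forall>t. p t \<notin> forcing_region E N K"
    "\<forall>t. \<exists>y. y \<in> cnbhd E (pos (p t) (turn (p t))) \<and> p (Suc t) = move N (p t) y \<and>
              (turn (p t) \<in> K \<longrightarrow> y = \<sigma> (map p [0..<Suc t]))"
    using escape_from_forcing_region[OF fin s \<sigma>_legal] by blast
  then obtain t where "is_capture N (p t)"
    using \<sigma>_wins[rule_format, of p] by blast
  then show False
    using p(2) capture_in_forcing_region by blast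
qed

subsection \<open>A CR-optimal profile\<close>

definition attractor_rank :: "('v \<Rightarrow> 'v \<Rightarrow> bool) \<Rightarrow> nat \<Rightarrow> nat set \<Rightarrow> 'v state \<Rightarrow> nat" where
  "attractor_rank E N K s = (LEAST n. s \<in> attractor E N K n)"

lemma in_attractor_rank:
  "s \<in> forcing_region E N K \<Longrightarrow> s \<in> attractor E N K (attractor_rank E N K s)"
  using LeastI_ex[of "\<lambda>n. s \<in> attractor E N K n"]
  unfolding forcing_region_def attractor_rank_def by blast

lemma attractor_rank_le: "s \<in> attractor E N K n \<Longrightarrow> attractor_rank E N K s \<le> n"
  unfolding attractor_rank_def by (rule Least_le)

lemma attractor_rank_eq_0_iff:
  "s \<in> forcing_region E N K \<Longrightarrow> attractor_rank E N K s = 0 \<longleftrightarrow> is_capture N s"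
  using in_attractor_rank[of s] attractor_rank_le[of s E N K 0] by fastforce

lemma attractor_rank_coalition_move:
  assumes "turn s \<in> K" "y \<in> cnbhd E (pos s (turn s))" "move N s y \<in> forcing_region E N K"
  shows "s \<in> forcing_region E N K \<and> attractor_rank E N K s \<le> Suc (attractor_rank E N K (move N s y))"
proof -
  have "s \<in> attractor E N K (Suc (attractor_rank E N K (move N s y)))"
    using attractor_coalition_step[OF assms(1,2) in_attractor_rank[OF assms(3)]] .
  then show ?thesis
    using forcing_regionI attractor_rank_le by blast
qed

lemma attractor_rank_opponent_move:
  assumes "s \<in> forcing_region E N K" "\<not> is_capture N s" "turn s \<notin> K" "y \<in> cnbhd E (pos s (turn s))"
  shows "move N s y \<in> forcing_region E N K \<and> Suc (attractor_rank E N K (move N s y)) \<le> attractor_rank E N K s"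
proof -
  obtain k where k: "attractor_rank E N K s = Suc k"
    using assms(1,2) attractor_rank_eq_0_iff not0_implies_Suc by blast
  then have "move N s y \<in> attractor E N K k"
    using attractor_opponent_move[OF _ assms(2-4)] in_attractor_rank[OF assms(1)] by simp
  then show ?thesis
    using k forcing_regionI[of "move N s y"] attractor_rank_le[of "move N s y"] by simp
qed

lemma attractor_rank_decreasing_move:
  assumes "s \<in> forcing_region E N K" "\<not> is_capture N s"
  shows "\<exists>y\<in>cnbhd E (pos s (turn s)). move N s y \<in> forcing_region E N K \<and>
           Suc (attractor_rank E N K (move N s y)) = attractor_rank E N K s"
proof -
  obtain k where k: "attractor_rank E N K s = Suc k"
    using assms attractor_rank_eq_0_iff not0_implies_Suc by blast
  have s_in: "s \<in> attractor E N K (Suc k)"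
    using in_attractor_rank[OF assms(1)] k by simp
  show ?thesis
  proof (cases "turn s \<in> K")
    case True
    then obtain y where y: "y \<in> cnbhd E (pos s (turn s))" "move N s y \<in> attractor E N K k"
      using attractor_coalition_move[OF s_in assms(2)] by blast
    have "attractor_rank E N K (move N s y) \<le> k"
      using attractor_rank_le[OF y(2)] .
    moreover have "attractor_rank E N K s \<le> Suc (attractor_rank E N K (move N s y))"
      using attractor_rank_coalition_move[OF True y(1) forcing_regionI[OF y(2)]] by blast
    ultimately show ?thesis
      using k y forcing_regionI by fastforce
  next
    case False
    let ?x = "pos s (turn s)"
    have moves: "\<forall>y\<in>cnbhd E ?x. move N s y \<in> forcing_region E N K \<and>
        Suc (attractor_rank E N K (move N s y)) \<le> Suc k"
      using attractor_rank_opponent_move[OF assms False] k by simp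
    show ?thesis
    proof (rule ccontr)
      assume "\<not> ?thesis"
      then have lt: "\<forall>y\<in>cnbhd E ?x. attractor_rank E N K (move N s y) < k"
        using moves k by fastforce
      then obtain k' where k': "k = Suc k'"
        using cnbhd_self[of ?x E] not0_implies_Suc by fastforce
      have "\<forall>y\<in>cnbhd E ?x. move N s y \<in> attractor E N K k'"
        using moves lt k' in_attractor_rank attractor_mono[of _ k'] by (metis less_Suc_eq_le subsetD)
      then have "attractor_rank E N K s \<le> k"
        using attractor_opponent_step[OF False] attractor_rank_le k' by blast
      then show False
        using k by simp
    qed
  qed
qed

text \<open>If the cops can force a capture, both sides optimally make the attractor rank drop by one in
  each move; otherwise the robber stays outside the forcing region of the cops forever.\<close>

definition rank_optimal_move :: "('v \<Rightarrow> 'v \<Rightarrow> bool) \<Rightarrow> nat \<Rightarrow> nat set \<Rightarrow> 'v state \<Rightarrow> 'v \<Rightarrow> bool" where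
  "rank_optimal_move E N K s y \<longleftrightarrow> is_capture N s \<or>
     (if s \<in> forcing_region E N K
      then move N s y \<in> forcing_region E N K \<and>
           Suc (attractor_rank E N K (move N s y)) = attractor_rank E N K s
      else move N s y \<notin> forcing_region E N K)"

definition rank_strategy :: "('v \<Rightarrow> 'v \<Rightarrow> bool) \<Rightarrow> nat \<Rightarrow> nat set \<Rightarrow> 'v state \<Rightarrow> 'v" where
  "rank_strategy E N K s =
     (SOME y. y \<in> cnbhd E (pos s (turn s)) \<and> rank_optimal_move E N K s y)"

lemma rank_optimal_move_exists:
  assumes "finite (cnbhd E (pos s (turn s)))"
  shows "\<exists>y. y \<in> cnbhd E (pos s (turn s)) \<and> rank_optimal_move E N K s y"
proof (cases "is_capture N s \<or> s \<in> forcing_region E N K")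
  case True
  then show ?thesis
    using attractor_rank_decreasing_move[of s E N K] cnbhd_self
    unfolding rank_optimal_move_def by metis
next
  case False
  then have "\<exists>y\<in>cnbhd E (pos s (turn s)). move N s y \<notin> forcing_region E N K"
    using opponent_escape[OF assms] coalition_cannot_enter cnbhd_self by metis
  then show ?thesis
    using False unfolding rank_optimal_move_def by auto
qed

lemma rank_strategy:
  assumes "\<forall>x. finite (cnbhd E x)"
  shows "rank_strategy E N K s \<in> cnbhd E (pos s (turn s)) \<and>
    rank_optimal_move E N K s (rank_strategy E N K s)"
  unfolding rank_strategy_def using someI_ex[OF rank_optimal_move_exists] assms by blast

lemma legal_rank_strategy: "\<forall>x. finite (cnbhd E x) \<Longrightarrow> legal_strat V E N (rank_strategy E N K)"
  unfolding legal_strat_def using rank_strategy by blast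

lemma play_rank_strategy_in_region:
  assumes fin: "\<forall>x. finite (cnbhd E x)" and s: "s \<in> forcing_region E N K"
    and t: "t \<le> attractor_rank E N K s"
  shows "play N (rank_strategy E N K) s t \<in> forcing_region E N K \<and>
    attractor_rank E N K (play N (rank_strategy E N K) s t) + t = attractor_rank E N K s"
  using t
proof (induction t)
  case (Suc t)
  let ?q = "play N (rank_strategy E N K) s t"
  have "?q \<in> forcing_region E N K" "attractor_rank E N K ?q + t = attractor_rank E N K s"
    using Suc by auto
  moreover have "\<not> is_capture N ?q"
    using Suc attractor_rank_eq_0_iff calculation by fastforce
  ultimately show ?case
    using rank_strategy[OF fin, of N K ?q] unfolding rank_optimal_move_def by auto
qed (simp add: s)

lemma play_rank_strategy_outside_region:
  assumes fin: "\<forall>x. finite (cnbhd E x)" and s: "s \<notin> forcing_region E N K"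
  shows "play N (rank_strategy E N K) s t \<notin> forcing_region E N K"
proof (induction t)
  case (Suc t)
  let ?q = "play N (rank_strategy E N K) s t"
  have "\<not> is_capture N ?q"
    using Suc capture_in_forcing_region by blast
  then show ?case
    using Suc rank_strategy[OF fin, of N K ?q] unfolding rank_optimal_move_def by simp
qed (simp add: s)

lemma robber_payoff_rank_strategy:
  assumes fin: "\<forall>x. finite (cnbhd E x)"
  shows "robber_payoff N \<gamma> (rank_strategy E N K) s =
    (if s \<in> forcing_region E N K then - (\<gamma> ^ attractor_rank E N K s) else 0)"
proof (cases "s \<in> forcing_region E N K")
  case True
  let ?r = "attractor_rank E N K s"
  have capture_iff: "is_capture N (play N (rank_strategy E N K) s t) \<longleftrightarrow> t = ?r" if "t \<le> ?r" for t
    using play_rank_strategy_in_region[OF fin True that] attractor_rank_eq_0_iff by fastforce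
  have "(LEAST t. is_capture N (play N (rank_strategy E N K) s t)) = ?r"
  proof (rule Least_equality)
    show "?r \<le> t" if "is_capture N (play N (rank_strategy E N K) s t)" for t
      using capture_iff[of t] that by fastforce
  qed (simp add: capture_iff)
  then show ?thesis
    using True capture_iff[of ?r] unfolding robber_payoff_def by auto
next
  case False
  then show ?thesis
    using play_rank_strategy_outside_region[OF fin False] capture_in_forcing_region
    unfolding robber_payoff_def by metis
qed

lemma attractor_rank_coalition_strategy_move:
  assumes fin: "\<forall>x. finite (cnbhd E x)" and s: "s \<in> forcing_region E N K" "\<not> is_capture N s"
    and y: "y \<in> cnbhd E (pos s (turn s))" "turn s \<in> K \<Longrightarrow> y = rank_strategy E N K s"
  shows "move N s y \<in> forcing_region E N K \<and> Suc (attractor_rank E N K (move N s y)) \<le> attractor_rank E N K s"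
proof (cases "turn s \<in> K")
  case True
  then have "rank_optimal_move E N K s y"
    using rank_strategy[OF fin, of N K s] y(2) by simp
  then show ?thesis
    using s unfolding rank_optimal_move_def by simp
next
  case False
  then show ?thesis
    using attractor_rank_opponent_move[OF s False y(1)] by simp
qed

lemma attractor_rank_opponent_strategy_move:
  assumes fin: "\<forall>x. finite (cnbhd E x)" and m: "move N s y \<in> forcing_region E N K"
    and y: "y \<in> cnbhd E (pos s (turn s))" "turn s \<notin> K \<Longrightarrow> y = rank_strategy E N K s"
  shows "s \<in> forcing_region E N K \<and> attractor_rank E N K s \<le> Suc (attractor_rank E N K (move N s y))"
proof (cases "turn s \<in> K")
  case True
  then show ?thesis
    using attractor_rank_coalition_move[OF True y(1) m] by simp
next
  case False
  show ?thesis
  proof (cases "is_capture N s")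
    case True
    then have "s \<in> forcing_region E N K"
      by (rule capture_in_forcing_region)
    then show ?thesis
      using True attractor_rank_eq_0_iff[of s E N K] by simp
  next
    case nc: False
    have "rank_optimal_move E N K s y"
      using rank_strategy[OF fin, of N K s] y(2)[OF False] by simp
    then show ?thesis
      using nc m unfolding rank_optimal_move_def by (cases "s \<in> forcing_region E N K") simp_all
  qed
qed

lemma rank_strategy_coalition_captures:
  assumes G: "simple_conn_graph V E" and v: "valid_state V N s" and \<rho>: "legal_strat V E N \<rho>"
    and coalition: "\<And>t. turn (play N \<rho> s t) \<in> K \<Longrightarrow> \<rho> (play N \<rho> s t) = rank_strategy E N K (play N \<rho> s t)"
    and s: "s \<in> forcing_region E N K"
  shows "\<exists>t\<le>attractor_rank E N K s. is_capture N (play N \<rho> s t)"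
proof (rule ccontr)
  assume no_capture: "\<not> ?thesis"
  have fin: "\<forall>x. finite (cnbhd E x)"
    using finite_cnbhd[OF G] by blast
  have "t \<le> attractor_rank E N K s \<Longrightarrow> play N \<rho> s t \<in> forcing_region E N K \<and>
      attractor_rank E N K (play N \<rho> s t) + t \<le> attractor_rank E N K s" for t
  proof (induction t)
    case (Suc t)
    let ?q = "play N \<rho> s t"
    have "\<rho> ?q \<in> cnbhd E (pos ?q (turn ?q))"
      using \<rho> valid_state_play[OF G v \<rho>] unfolding legal_strat_def by blast
    moreover have "?q \<in> forcing_region E N K" "attractor_rank E N K ?q + t \<le> attractor_rank E N K s"
      using Suc by simp_all
    moreover have "\<not> is_capture N ?q"
      using Suc.prems no_capture by simp
    ultimately show ?case
      using attractor_rank_coalition_strategy_move[OF fin _ _ _ coalition] by fastforce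
  qed (simp add: s)
  then have "is_capture N (play N \<rho> s (attractor_rank E N K s))"
    using attractor_rank_eq_0_iff by fastforce
  then show False
    using no_capture by blast
qed

lemma rank_strategy_opponents_delay:
  assumes G: "simple_conn_graph V E" and v: "valid_state V N s" and \<rho>: "legal_strat V E N \<rho>"
    and opponents: "\<And>t. turn (play N \<rho> s t) \<notin> K \<Longrightarrow> \<rho> (play N \<rho> s t) = rank_strategy E N K (play N \<rho> s t)"
    and capture: "is_capture N (play N \<rho> s T)"
  shows "s \<in> forcing_region E N K \<and> attractor_rank E N K s \<le> T"
proof -
  have fin: "\<forall>x. finite (cnbhd E x)"
    using finite_cnbhd[OF G] by blast
  have "play N \<rho> s t \<in> forcing_region E N K \<Longrightarrow>
      s \<in> forcing_region E N K \<and> attractor_rank E N K s \<le> attractor_rank E N K (play N \<rho> s t) + t" for t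
  proof (induction t)
    case (Suc t)
    let ?q = "play N \<rho> s t"
    have "\<rho> ?q \<in> cnbhd E (pos ?q (turn ?q))"
      using \<rho> valid_state_play[OF G v \<rho>] unfolding legal_strat_def by blast
    then have "?q \<in> forcing_region E N K \<and>
        attractor_rank E N K ?q \<le> Suc (attractor_rank E N K (play N \<rho> s (Suc t)))"
      using attractor_rank_opponent_strategy_move[OF fin _ _ opponents[of t]] Suc.prems by simp
    then show ?case
      using Suc.IH by fastforce
  qed simp
  moreover have "play N \<rho> s T \<in> forcing_region E N K"
    using capture by (rule capture_in_forcing_region)
  ultimately show ?thesis
    using attractor_rank_eq_0_iff capture by fastforce
qed

lemma robber_payoff_le_0: "0 \<le> \<gamma> \<Longrightarrow> robber_payoff N \<gamma> \<rho> s \<le> 0"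
  unfolding robber_payoff_def by auto

lemma robber_deviation_from_rank_strategy:
  assumes G: "simple_conn_graph V E" and \<gamma>: "0 \<le> \<gamma>" "\<gamma> \<le> 1"
    and v: "valid_state V N s" and \<tau>: "legal_strat V E N \<tau>"
  shows "robber_payoff N \<gamma> (mix {N} \<tau> (rank_strategy E N {1..N-1})) s \<le>
    robber_payoff N \<gamma> (rank_strategy E N {1..N-1}) s"
proof -
  let ?K = "{1..N-1}" and ?\<sigma> = "rank_strategy E N {1..N-1}"
  let ?r = "attractor_rank E N ?K s"
  have fin: "\<forall>x. finite (cnbhd E x)"
    using finite_cnbhd[OF G] by blast
  show ?thesis
  proof (cases "s \<in> forcing_region E N ?K")
    case True
    have "turn q \<in> ?K \<Longrightarrow> mix {N} \<tau> ?\<sigma> q = ?\<sigma> q" for q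
      unfolding mix_def by auto
    then obtain t where t: "t \<le> ?r" "is_capture N (play N (mix {N} \<tau> ?\<sigma>) s t)"
      using rank_strategy_coalition_captures[OF G v legal_strat_mix[OF \<tau> legal_rank_strategy[OF fin]]
          _ True]
      by blast
    obtain T where "T \<le> t" "robber_payoff N \<gamma> (mix {N} \<tau> ?\<sigma>) s = - (\<gamma> ^ T)"
      using first_capture[OF t(2)] by blast
    moreover have "\<gamma> ^ ?r \<le> \<gamma> ^ T"
      using power_decreasing[of T ?r \<gamma>] calculation(1) t(1) \<gamma> by simp
    ultimately show ?thesis
      using True robber_payoff_rank_strategy[OF fin, of N \<gamma> ?K s] by simp
  next
    case False
    then show ?thesis
      using robber_payoff_rank_strategy[OF fin, of N \<gamma> ?K s] robber_payoff_le_0[OF \<gamma>(1)] by simp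
  qed
qed

lemma cops_deviation_from_rank_strategy:
  assumes G: "simple_conn_graph V E" and \<gamma>: "0 \<le> \<gamma>" "\<gamma> \<le> 1"
    and v: "valid_state V N s" and \<tau>: "legal_strat V E N \<tau>"
  shows "robber_payoff N \<gamma> (rank_strategy E N {1..N-1}) s \<le>
    robber_payoff N \<gamma> (mix {N} (rank_strategy E N {1..N-1}) \<tau>) s"
proof -
  let ?K = "{1..N-1}" and ?\<sigma> = "rank_strategy E N {1..N-1}"
  let ?\<rho> = "mix {N} ?\<sigma> \<tau>" and ?r = "attractor_rank E N ?K s"
  have fin: "\<forall>x. finite (cnbhd E x)"
    using finite_cnbhd[OF G] by blast
  have \<rho>: "legal_strat V E N ?\<rho>"
    using legal_strat_mix[OF legal_rank_strategy[OF fin] \<tau>] .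
  show ?thesis
  proof (cases "\<exists>t. is_capture N (play N ?\<rho> s t)")
    case True
    then obtain t0 where "is_capture N (play N ?\<rho> s t0)"
      by blast
    then obtain T where T: "is_capture N (play N ?\<rho> s T)" "robber_payoff N \<gamma> ?\<rho> s = - (\<gamma> ^ T)"
      by (rule first_capture)
    have "turn (play N ?\<rho> s t) \<notin> ?K \<Longrightarrow> ?\<rho> (play N ?\<rho> s t) = ?\<sigma> (play N ?\<rho> s t)" for t
      using valid_state_turn[OF valid_state_play[OF G v \<rho>, of t]] unfolding mix_def by auto
    then have r: "s \<in> forcing_region E N ?K" "?r \<le> T"
      using rank_strategy_opponents_delay[OF G v \<rho> _ T(1)] by blast+
    then have "\<gamma> ^ T \<le> \<gamma> ^ ?r"
      using power_decreasing[of ?r T \<gamma>] \<gamma> by simp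
    then show ?thesis
      using T(2) r(1) robber_payoff_rank_strategy[OF fin, of N \<gamma> ?K s] by simp
  next
    case False
    then show ?thesis
      using robber_payoff_rank_strategy[OF fin, of N \<gamma> ?K s] robber_payoff_no_capture[of N ?\<rho> s \<gamma>]
        zero_le_power[OF \<gamma>(1)]
      by simp
  qed
qed

theorem CR_optimal_rank_strategy:
  assumes G: "simple_conn_graph V E" and \<gamma>: "0 \<le> \<gamma>" "\<gamma> \<le> 1"
  shows "CR_optimal V E N \<gamma> (rank_strategy E N {1..N-1})"
proof -
  have "\<forall>x. finite (cnbhd E x)"
    using finite_cnbhd[OF G] by blast
  then show ?thesis
    unfolding CR_optimal_def
    using legal_rank_strategy robber_deviation_from_rank_strategy[OF G \<gamma>]
      cops_deviation_from_rank_strategy[OF G \<gamma>]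
    by blast
qed

subsection \<open>Trapping the robber\<close>

definition turn_at :: "nat \<Rightarrow> nat \<Rightarrow> nat" where
  "turn_at N t = (if t mod N = 0 then N else t mod N)"

lemma turn_at_less: "0 < t \<Longrightarrow> t < N \<Longrightarrow> turn_at N t = t"
  unfolding turn_at_def by simp

lemma turn_at_self: "turn_at N N = N"
  unfolding turn_at_def by simp

lemma turn_at_second_round: "N < t \<Longrightarrow> t < N + N \<Longrightarrow> turn_at N t = t - N"
  unfolding turn_at_def using le_mod_geq[of N t] by simp

lemma nxt_turn_at: "2 \<le> N \<Longrightarrow> nxt N (turn_at N t) = turn_at N (Suc t)"
  unfolding turn_at_def nxt_def by (auto simp: mod_Suc)

lemma turn_at_range: "2 \<le> N \<Longrightarrow> turn_at N t \<in> {1..N}"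
  unfolding turn_at_def by (auto simp: Suc_leI)

definition legal_run :: "('v \<Rightarrow> 'v \<Rightarrow> bool) \<Rightarrow> nat \<Rightarrow> (nat \<Rightarrow> 'v state) \<Rightarrow> bool" where
  "legal_run E N p \<longleftrightarrow> (\<forall>t. \<exists>y\<in>cnbhd E (pos (p t) (turn (p t))). p (Suc t) = move N (p t) y)"

lemma legal_run_play:
  assumes "simple_conn_graph V E" "valid_state V N s" "legal_strat V E N \<rho>"
  shows "legal_run E N (play N \<rho> s)"
  unfolding legal_run_def
proof
  fix t
  have "\<rho> (play N \<rho> s t) \<in> cnbhd E (pos (play N \<rho> s t) (turn (play N \<rho> s t)))"
    using assms(3) valid_state_play[OF assms] unfolding legal_strat_def by blast
  then show "\<exists>y\<in>cnbhd E (pos (play N \<rho> s t) (turn (play N \<rho> s t))).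
      play N \<rho> s (Suc t) = move N (play N \<rho> s t) y"
    by auto
qed

locale robber_first_run =
  fixes E :: "'v \<Rightarrow> 'v \<Rightarrow> bool" and N :: nat and p :: "nat \<Rightarrow> 'v state"
  assumes legal: "legal_run E N p" and length_0: "length (fst (p 0)) = N"
    and turn_0: "turn (p 0) = N" and N2: "2 \<le> N"
begin

lemma move_at: obtains y where "y \<in> cnbhd E (pos (p t) (turn (p t)))" "p (Suc t) = move N (p t) y"
  using legal unfolding legal_run_def by blast

lemma length_at: "length (fst (p t)) = N"
proof (induction t)
  case (Suc t)
  obtain y where "p (Suc t) = move N (p t) y"
    using move_at by blast
  then show ?case
    using Suc by (simp add: fst_move)
qed (rule length_0)

lemma turn_at: "turn (p t) = turn_at N t"
proof (induction t)
  case 0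
  then show ?case
    using turn_0 unfolding turn_at_def by simp
next
  case (Suc t)
  obtain y where "p (Suc t) = move N (p t) y"
    using move_at by blast
  then show ?case
    using Suc nxt_turn_at[OF N2] by simp
qed

lemma turn_range: "1 \<le> turn (p t)" "turn (p t) \<le> N"
  using turn_at_range[OF N2] turn_at by auto

lemma pos_after_move:
  assumes "1 \<le> i" "i \<le> N" "p (Suc t) = move N (p t) y"
  shows "pos (p (Suc t)) i = (if i = turn (p t) then y else pos (p t) i)"
  using assms pos_move[of i "p t" N y] length_at turn_range by simp

lemma pos_unmoved: "1 \<le> i \<Longrightarrow> i \<le> N \<Longrightarrow> turn (p t) \<noteq> i \<Longrightarrow> pos (p (Suc t)) i = pos (p t) i"
  using move_at[of t] pos_after_move by metis

lemma pos_mover: "pos (p (Suc t)) (turn (p t)) \<in> cnbhd E (pos (p t) (turn (p t)))"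
proof -
  obtain y where "y \<in> cnbhd E (pos (p t) (turn (p t)))" "p (Suc t) = move N (p t) y"
    by (rule move_at)
  then show ?thesis
    using pos_after_move[of "turn (p t)"] turn_range by simp
qed

lemma pos_constant:
  assumes "1 \<le> i" "i \<le> N" "a \<le> b" "\<And>t. a \<le> t \<Longrightarrow> t < b \<Longrightarrow> turn (p t) \<noteq> i"
  shows "pos (p b) i = pos (p a) i"
  using assms(3,4)
proof (induction b)
  case (Suc b)
  show ?case
  proof (cases "a = Suc b")
    case False
    then show ?thesis
      using Suc pos_unmoved[OF assms(1,2), of b] by simp
  qed simp
qed simp

end

definition trap_config :: "('v \<Rightarrow> 'v \<Rightarrow> bool) \<Rightarrow> nat \<Rightarrow> nat \<Rightarrow> 'v state \<Rightarrow> bool" where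
  "trap_config E N m s \<longleftrightarrow> turn s = N \<and> E (pos s m) (pos s N) \<and>
     (\<forall>y\<in>cnbhd E (pos s N). y \<in> cnbhd E (pos s m) \<or> (\<exists>j\<in>{1..N-1}. pos s j = y) \<or> is_leaf E y)"

text \<open>A robber escaping from u has to go to a leaf next to u; heading for u corners it there.\<close>

definition trap_move :: "('v \<Rightarrow> 'v \<Rightarrow> bool) \<Rightarrow> nat \<Rightarrow> nat \<Rightarrow> 'v \<Rightarrow> 'v state \<Rightarrow> 'v" where
  "trap_move E N m u q = (if pos q N \<in> cnbhd E (pos q m) then pos q N
      else if u \<in> cnbhd E (pos q m) then u else pos q m)"

definition trap_strategy :: "('v \<Rightarrow> 'v \<Rightarrow> bool) \<Rightarrow> nat \<Rightarrow> nat \<Rightarrow> 'v \<Rightarrow> 'v state \<Rightarrow> 'v" where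
  "trap_strategy E N m u q = (if turn q = m then trap_move E N m u q else pos q (turn q))"

lemma trap_strategy_cnbhd: "trap_strategy E N m u q \<in> cnbhd E (pos q (turn q))"
  unfolding trap_strategy_def trap_move_def by auto

lemma legal_trap_strategy: "legal_strat V E N (trap_strategy E N m u)"
  unfolding legal_strat_def by (simp add: trap_strategy_cnbhd)

locale escaping_trap_run = robber_first_run E N p for E :: "'v \<Rightarrow> 'v \<Rightarrow> bool" and N p +
  fixes V :: "'v set" and m :: nat
  assumes G: "simple_conn_graph V E" and m: "m \<in> {1..N-1}"
    and trap: "trap_config E N m (p 0)"
    and follows: "\<And>t. turn (p t) = m \<Longrightarrow> pos (p (Suc t)) m = trap_move E N m (pos (p 0) N) (p t)"
    and no_capture: "\<And>t. \<not> is_capture N (p t)"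
begin

abbreviation "u \<equiv> pos (p 0) N"
abbreviation "w \<equiv> pos (p 0) m"
definition y where "y = pos (p 1) N"

lemma m_range: "1 \<le> m" "m < N" "m \<le> N"
  using m by auto

lemma cop_m_never_meets_robber: "pos (p t) m = y' \<Longrightarrow> pos (p t) N = y' \<Longrightarrow> False"
  using no_capture captureI[OF m] by metis

lemma robber_at_y:
  assumes "1 \<le> t" "t \<le> N"
  shows "pos (p t) N = y"
  unfolding y_def
proof (rule pos_constant)
  show "turn (p t') \<noteq> N" if "1 \<le> t'" "t' < t" for t'
    using that assms turn_at turn_at_less[of t' N] by simp
qed (use assms N2 in auto)

lemma y_cnbhd_u: "y \<in> cnbhd E u"
  using pos_mover[of 0] turn_0 unfolding y_def by simp

lemma y_unoccupied: "j \<in> {1..N-1} \<Longrightarrow> pos (p 0) j \<noteq> y"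
  using pos_unmoved[of j 0] turn_0 no_capture[of 1] captureI[of j N "p 1"] unfolding y_def by fastforce

lemma turn_m: "turn (p m) = m"
  using turn_at turn_at_less m_range by simp

lemma cop_m_at_w: "pos (p m) m = w"
proof (rule pos_constant)
  show "turn (p t) \<noteq> m" if "0 \<le> t" "t < m" for t
    using that turn_at m_range unfolding turn_at_def by simp
qed (use m_range in auto)

lemma y_not_cnbhd_w: "y \<notin> cnbhd E w"
proof
  assume "y \<in> cnbhd E w"
  then have "pos (p (Suc m)) m = y"
    using follows[OF turn_m] cop_m_at_w robber_at_y[of m] m_range unfolding trap_move_def by simp
  moreover have "pos (p (Suc m)) N = y"
    using robber_at_y m_range by simp
  ultimately show False
    by (rule cop_m_never_meets_robber)
qed

lemma y_leaf: "is_leaf E y"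
  using trap y_cnbhd_u y_unoccupied y_not_cnbhd_w unfolding trap_config_def by blast

lemma u_cnbhd_w: "u \<in> cnbhd E w"
  using trap unfolding trap_config_def cnbhd_def by simp

lemma u_y: "E u y"
  using u_cnbhd_w y_not_cnbhd_w y_cnbhd_u unfolding cnbhd_def by auto

lemma cop_m_at_u:
  assumes "Suc m \<le> t" "t \<le> N + m"
  shows "pos (p t) m = u"
proof -
  have "pos (p (Suc m)) m = u"
    using follows[OF turn_m] cop_m_at_w robber_at_y[of m] m_range y_not_cnbhd_w u_cnbhd_w
    unfolding trap_move_def by simp
  moreover have "turn (p t') \<noteq> m" if "Suc m \<le> t'" "t' < t" for t'
  proof -
    consider "t' < N" | "t' = N" | "N < t'" by linarith
    then show ?thesis
      using that assms turn_at turn_at_less turn_at_self turn_at_second_round m_range by cases auto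
  qed
  ultimately show ?thesis
    using pos_constant[OF m_range(1,3) assms(1)] by simp
qed

lemma robber_stays_at_y: "pos (p (N + m)) N = y"
proof -
  have "pos (p (Suc N)) N \<in> cnbhd E y"
    using pos_mover[of N] turn_at turn_at_self robber_at_y[of N] N2 by simp
  moreover have "pos (p (Suc N)) N \<noteq> u"
    using cop_m_never_meets_robber[of "Suc N"] cop_m_at_u[of "Suc N"] m_range by auto
  ultimately have "pos (p (Suc N)) N = y"
    using leaf_cnbhd[OF y_leaf simple_conn_graph_sym[OF G u_y]] by blast
  moreover have "turn (p t) \<noteq> N" if "Suc N \<le> t" "t < N + m" for t
    using that turn_at turn_at_second_round m_range by simp
  ultimately show ?thesis
    using pos_constant[of N "Suc N" "N + m"] m_range by simp
qed

lemma escape_impossible: False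
proof -
  have turn: "turn (p (N + m)) = m"
    using turn_at turn_at_second_round[of N "N + m"] m_range by simp
  then have "pos (p (Suc (N + m))) m = y"
    using follows cop_m_at_u[of "N + m"] robber_stays_at_y u_y m_range
    unfolding trap_move_def cnbhd_def by simp
  moreover have "pos (p (Suc (N + m))) N = y"
    using pos_unmoved[of N "N + m"] turn robber_stays_at_y m_range by simp
  ultimately show False
    by (rule cop_m_never_meets_robber)
qed

end

lemma trap_run_captures:
  assumes "simple_conn_graph V E" "2 \<le> N" "m \<in> {1..N-1}" "valid_state V N (p 0)"
    and "trap_config E N m (p 0)" "legal_run E N p"
    and "\<And>t. turn (p t) = m \<Longrightarrow> pos (p (Suc t)) m = trap_move E N m (pos (p 0) N) (p t)"
  shows "\<exists>t. is_capture N (p t)"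
proof (rule ccontr)
  assume "\<not> ?thesis"
  then interpret escaping_trap_run E N p V m
    using assms unfolding escaping_trap_run_def robber_first_run_def escaping_trap_run_axioms_def
      valid_state_def trap_config_def by auto
  show False
    by (rule escape_impossible)
qed

lemma can_force_trap:
  assumes G: "simple_conn_graph V E" and N2: "2 \<le> N" and m: "m \<in> {1..N-1}"
    and v: "valid_state V N s" and trap: "trap_config E N m s"
  shows "can_force V E N s {m}"
  unfolding can_force_def
proof (intro exI[of _ "\<lambda>h. trap_strategy E N m (pos s N) (last h)"] conjI allI impI)
  let ?\<sigma> = "\<lambda>h. trap_strategy E N m (pos s N) (last h)"
  show "?\<sigma> h \<in> cnbhd E (pos (last h) (turn (last h)))" for h
    by (rule trap_strategy_cnbhd)
  fix p assume p: "p 0 = s \<and> (\<forall>t. \<exists>y. y \<in> cnbhd E (pos (p t) (turn (p t))) \<and> p (Suc t) = move N (p t) y \<and>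
                  (turn (p t) \<in> {m} \<longrightarrow> y = ?\<sigma> (map p [0..<Suc t])))"
  then have run: "legal_run E N p"
    unfolding legal_run_def by blast
  have valid: "valid_state V N (p t)" for t
  proof (induction t)
    case (Suc t)
    then show ?case
      using p valid_state_move[OF G Suc] by metis
  qed (use p v in simp)
  have "pos (p (Suc t)) m = trap_move E N m (pos (p 0) N) (p t)" if turn: "turn (p t) = m" for t
  proof -
    obtain y where y: "p (Suc t) = move N (p t) y" "turn (p t) \<in> {m} \<longrightarrow> y = ?\<sigma> (map p [0..<Suc t])"
      using p by blast
    have "last (map p [0..<Suc t]) = p t"
      by (simp del: upt_Suc add: last_map)
    then have "y = trap_move E N m (pos (p 0) N) (p t)"
      using y(2) turn p unfolding trap_strategy_def by simp
    then show ?thesis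
      using y(1) pos_move_mover[OF valid, of t y] turn by simp
  qed
  then show "\<exists>t. is_capture N (p t)"
    using trap_run_captures[OF G N2 m _ _ run] p v trap by blast
qed

lemma state_cop_num_eq_1:
  assumes "can_force V E N s {m}" "m \<in> {1..N-1}"
  shows "state_cop_num V E N s = 1"
proof -
  have force_1: "k_cops_force V E N s 1"
    unfolding k_cops_force_def using assms by (auto intro!: exI[of _ "{m}"])
  moreover have "(LEAST k. k_cops_force V E N s k) = 1"
  proof (rule Least_equality)
    show "k_cops_force V E N s 1"
      by (rule force_1)
  qed (simp add: k_cops_force_def)
  ultimately show ?thesis
    unfolding state_cop_num_def by (auto simp: one_enat_def)
qed

lemma trap_strategy_captures:
  assumes G: "simple_conn_graph V E" and N2: "2 \<le> N" and m: "m \<in> {1..N-1}"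
    and v: "valid_state V N s" and trap: "trap_config E N m s" and \<sigma>: "legal_strat V E N \<sigma>"
  shows "\<exists>t. is_capture N (play N (mix {N} \<sigma> (trap_strategy E N m (pos s N))) s t)"
proof -
  let ?\<rho> = "mix {N} \<sigma> (trap_strategy E N m (pos s N))"
  have \<rho>: "legal_strat V E N ?\<rho>"
    using legal_strat_mix[OF \<sigma> legal_trap_strategy] .
  have "pos (play N ?\<rho> s (Suc t)) m = trap_move E N m (pos s N) (play N ?\<rho> s t)"
    if turn: "turn (play N ?\<rho> s t) = m" for t
  proof -
    have "?\<rho> (play N ?\<rho> s t) = trap_move E N m (pos s N) (play N ?\<rho> s t)"
      using turn m unfolding mix_def trap_strategy_def by auto
    then show ?thesis
      using pos_move_mover[OF valid_state_play[OF G v \<rho>], of t] turn by simp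
  qed
  then show ?thesis
    using trap_run_captures[OF G N2 m _ _ legal_run_play[OF G v \<rho>]] v trap by simp
qed

subsection \<open>Optimal play and sure capture\<close>

lemma CR_optimal_captures:
  assumes opt: "CR_optimal V E N \<gamma> \<sigma>" and v: "valid_state V N s" and \<gamma>: "0 < \<gamma>"
    and \<tau>: "legal_strat V E N \<tau>" and capture: "is_capture N (play N (mix {N} \<sigma> \<tau>) s t0)"
  shows "\<exists>t. is_capture N (play N \<sigma> s t)"
proof (rule ccontr)
  assume "\<not> ?thesis"
  then have "robber_payoff N \<gamma> \<sigma> s = 0"
    using robber_payoff_no_capture by blast
  moreover obtain T where "robber_payoff N \<gamma> (mix {N} \<sigma> \<tau>) s = - (\<gamma> ^ T)"
    using first_capture[OF capture] by blast
  moreover have "robber_payoff N \<gamma> \<sigma> s \<le> robber_payoff N \<gamma> (mix {N} \<sigma> \<tau>) s"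
    using opt v \<tau> unfolding CR_optimal_def by blast
  ultimately show False
    using zero_less_power[OF \<gamma>, of T] by simp
qed

lemma play_distinct_before_first_capture:
  assumes "is_capture N (play N \<sigma> s T)" "\<forall>t<T. \<not> is_capture N (play N \<sigma> s t)" "i < T - 1"
  shows "play N \<sigma> s i \<noteq> play N \<sigma> s (T - 1)"
proof
  assume eq: "play N \<sigma> s i = play N \<sigma> s (T - 1)"
  obtain T' where T': "T = Suc T'"
    using assms(3) by (cases T) auto
  then have "play N \<sigma> s (Suc i) = play N \<sigma> s T"
    using eq by simp
  moreover have "Suc i < T"
    using assms(3) T' by simp
  ultimately show False
    using assms(1,2) by auto
qed

lemma robber_standing_still_avoids_capture:
  assumes T: "is_capture N (play N \<sigma> s (Suc T))" "\<forall>t<Suc T. \<not> is_capture N (play N \<sigma> s t)"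
    and turn: "turn (play N \<sigma> s T) = N" and t: "t \<le> Suc T"
  shows "\<not> is_capture N
    (play N (mix {N} (\<lambda>q. if q = play N \<sigma> s T then pos q N else \<sigma> q) \<sigma>) s t)"
proof -
  let ?z = "play N \<sigma> s T"
  let ?\<rho> = "mix {N} (\<lambda>q. if q = ?z then pos q N else \<sigma> q) \<sigma>"
  have same: "play N ?\<rho> s i = play N \<sigma> s i" if "i \<le> T" for i
    using that
  proof (induction i)
    case (Suc i)
    then have "play N \<sigma> s i \<noteq> ?z"
      using play_distinct_before_first_capture[OF T] by simp
    then show ?case
      using Suc unfolding mix_def by simp
  qed simp
  have "play N ?\<rho> s (Suc T) = move N ?z (pos ?z N)"
    using same[of T] turn unfolding mix_def by simp
  moreover have "fst (move N ?z (pos ?z N)) = fst ?z"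
    using turn unfolding fst_move pos_def by simp
  moreover have "\<not> is_capture N ?z"
    using T(2) by simp
  ultimately have "\<not> is_capture N (play N ?\<rho> s (Suc T))"
    using capture_iff_fst by metis
  then show ?thesis
    using t same T(2) by (cases "t = Suc T") auto
qed

text \<open>Under CR-optimal play the robber never steps onto a cop: standing still instead would
  postpone the capture.\<close>

lemma CR_optimal_capture_not_by_robber:
  assumes opt: "CR_optimal V E N \<gamma> \<sigma>" and v: "valid_state V N s" and \<gamma>: "0 < \<gamma>" "\<gamma> < 1"
    and T: "is_capture N (play N \<sigma> s (Suc T))" "\<forall>t<Suc T. \<not> is_capture N (play N \<sigma> s t)"
  shows "turn (play N \<sigma> s T) \<noteq> N"
proof
  assume turn: "turn (play N \<sigma> s T) = N"
  define \<tau> where "\<tau> q = (if q = play N \<sigma> s T then pos q N else \<sigma> q)" for q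
  have \<tau>: "legal_strat V E N \<tau>"
    using opt turn unfolding CR_optimal_def legal_strat_def \<tau>_def by auto
  let ?\<rho> = "mix {N} \<tau> \<sigma>"
  have no_capture: "\<not> is_capture N (play N ?\<rho> s t)" if "t \<le> Suc T" for t
    using robber_standing_still_avoids_capture[OF T turn that] unfolding \<tau>_def .
  have "robber_payoff N \<gamma> ?\<rho> s \<le> robber_payoff N \<gamma> \<sigma> s"
    using opt v \<tau> unfolding CR_optimal_def by blast
  also have "\<dots> = - (\<gamma> ^ Suc T)"
    by (rule robber_payoff_first_capture[OF T])
  also have "\<dots> < robber_payoff N \<gamma> ?\<rho> s"
  proof (cases "\<exists>t. is_capture N (play N ?\<rho> s t)")
    case True
    then obtain T' where T': "is_capture N (play N ?\<rho> s T')" "robber_payoff N \<gamma> ?\<rho> s = - (\<gamma> ^ T')"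
      using first_capture by metis
    then have "Suc T < T'"
      using no_capture not_le by blast
    then have "\<gamma> ^ T' < \<gamma> ^ Suc T"
      using power_strict_decreasing[of "Suc T" T' \<gamma>] \<gamma> by simp
    then show ?thesis
      using T'(2) by simp
  next
    case False
    then show ?thesis
      using robber_payoff_no_capture[of N ?\<rho> s \<gamma>] zero_less_power[OF \<gamma>(1), of "Suc T"]
      by (simp del: power_Suc)
  qed
  finally show False
    by simp
qed

lemma hat_C_exists:
  assumes G: "simple_conn_graph V E" and opt: "CR_optimal V E N \<gamma> \<sigma>"
    and v: "valid_state V N s" and nc: "\<not> is_capture N s" and \<gamma>: "0 < \<gamma>" "\<gamma> < 1"
    and \<tau>: "legal_strat V E N \<tau>" and capture: "is_capture N (play N (mix {N} \<sigma> \<tau>) s t0)"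
  shows "\<exists>m. hat_C V E N \<gamma> s m"
proof -
  obtain t where "is_capture N (play N \<sigma> s t)"
    using CR_optimal_captures[OF opt v \<gamma>(1) \<tau> capture] by blast
  then obtain T where T: "is_capture N (play N \<sigma> s T)" "\<forall>t<T. \<not> is_capture N (play N \<sigma> s t)"
    using first_capture by metis
  obtain T' where T': "T = Suc T'"
    using T(1) nc by (cases T) auto
  have \<sigma>: "legal_strat V E N \<sigma>"
    using opt unfolding CR_optimal_def by blast
  have "turn (play N \<sigma> s T') \<noteq> N"
    using CR_optimal_capture_not_by_robber[OF opt v \<gamma>] T T' by blast
  then have "turn (play N \<sigma> s T') \<in> {1..N-1}"
    using valid_state_turn[OF valid_state_play[OF G v \<sigma>, of T']] by auto
  moreover have "turn (play N \<sigma> s (T - 1)) = turn (play N \<sigma> s T')"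
    using T' by simp
  ultimately have "hat_C V E N \<gamma> s (turn (play N \<sigma> s T'))"
    unfolding hat_C_def using opt T T' zero_less_Suc by metis
  then show ?thesis ..
qed

text \<open>The robber steps onto a neighbour occupied by a cop other than the designated cop m.\<close>

lemma two_neighbour_cops_not_sure_capture:
  assumes v: "valid_state V N s" and turn: "turn s = N" and nc: "\<not> is_capture N s"
    and ij: "i \<in> {1..N-1}" "j \<in> {1..N-1}" "E (pos s N) (pos s i)" "E (pos s N) (pos s j)"
      "pos s i \<noteq> pos s j"
    and m: "hat_C V E N \<gamma> s m"
  shows "\<not> sure_capture V E N \<gamma> s"
proof
  assume sure: "sure_capture V E N \<gamma> s"
  obtain \<sigma> where opt: "CR_optimal V E N \<gamma> \<sigma>" and m_cop: "m \<in> {1..N-1}"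
    using m unfolding hat_C_def by blast
  have \<sigma>: "\<sigma> \<in> hat_Sigma V E N \<gamma> m"
    unfolding hat_Sigma_def using opt by blast
  obtain k where k: "k \<in> {1..N-1}" "E (pos s N) (pos s k)" "pos s k \<noteq> pos s m"
    using ij by metis
  define \<tau> where "\<tau> q = (if q = s then pos s k else pos q (turn q))" for q
  have \<tau>: "legal_strat V E N \<tau>"
    unfolding legal_strat_def \<tau>_def cnbhd_def using turn k(2) by auto
  let ?p = "play N (mix {m} \<sigma> \<tau>) s"
  have len: "length (fst s) = N"
    using v unfolding valid_state_def by simp
  have p1: "?p 1 = move N s (pos s k)"
    using m_cop turn unfolding mix_def \<tau>_def by auto
  have pos1: "pos (?p 1) N = pos s k" "pos (?p 1) k = pos s k" "pos (?p 1) m = pos s m"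
    using p1 pos_move[of _ s N] turn len m_cop k(1) by auto
  obtain t where t: "is_capture N (?p t)" "\<forall>t'<t. \<not> is_capture N (?p t')" "pos (?p t) m = pos (?p t) N"
    using sure m \<sigma> \<tau> unfolding sure_capture_def by blast
  have "pos (?p 1) k = pos (?p 1) N"
    using pos1(1,2) by (simp only:)
  then have "is_capture N (?p 1)"
    by (rule captureI[OF k(1)])
  then have "t = 1"
    using t(1,2) nc by (metis One_nat_def less_one linorder_neqE_nat play.simps(1))
  then show False
    using t(3) pos1 k(3) by simp
qed

lemma trap_with_second_neighbour_cop_not_G3:
  assumes G: "simple_conn_graph V E" and N2: "2 \<le> N" and \<gamma>: "0 < \<gamma>" "\<gamma> < 1"
    and G3: "in_G3 V E N \<gamma>" and m: "m \<in> {1..N-1}" and v: "valid_state V N s"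
    and nc: "\<not> is_capture N s" and trap: "trap_config E N m s"
    and j: "j \<in> {1..N-1}" "E (pos s N) (pos s j)" "pos s j \<noteq> pos s m"
  shows False
proof -
  have "state_cop_num V E N s = 1"
    using state_cop_num_eq_1[OF can_force_trap[OF G N2 m v trap] m] .
  then have sure: "sure_capture V E N \<gamma> s"
    using G3 v nc unfolding in_G3_def S_nc_def by blast
  let ?\<sigma> = "rank_strategy E N {1..N-1}"
  have opt: "CR_optimal V E N \<gamma> ?\<sigma>"
    using CR_optimal_rank_strategy[OF G] \<gamma> by simp
  then have "legal_strat V E N ?\<sigma>"
    unfolding CR_optimal_def by blast
  then obtain t where "is_capture N (play N (mix {N} ?\<sigma> (trap_strategy E N m (pos s N))) s t)"
    using trap_strategy_captures[OF G N2 m v trap] by blast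
  then obtain m' where m': "hat_C V E N \<gamma> s m'"
    using hat_C_exists[OF G opt v nc \<gamma> legal_trap_strategy] by blast
  have turn: "turn s = N" and u_w: "E (pos s N) (pos s m)"
    using trap simple_conn_graph_sym[OF G] unfolding trap_config_def by blast+
  show False
    using two_neighbour_cops_not_sure_capture[OF v turn nc m j(1) u_w j(2) j(3)[symmetric] m'] sure
    by blast
qed

subsection \<open>The robber on a non-leaf escapes a single cop\<close>

text \<open>The state within the round that starts at s: the robber has moved to y, cop m is at z and
  the other cops have not moved; token i is to move.\<close>

definition round_state :: "nat \<Rightarrow> nat \<Rightarrow> 'v state \<Rightarrow> 'v \<Rightarrow> 'v \<Rightarrow> nat \<Rightarrow> 'v state" where
  "round_state N m s y z i = (((fst s)[N - 1 := y])[m - 1 := z], i)"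

lemma pos_round_state:
  assumes "length (fst s) = N" "m \<in> {1..N-1}" "1 \<le> j" "j \<le> N"
  shows "pos (round_state N m s y z i) j = (if j = m then z else if j = N then y else pos s j)"
  using assms unfolding round_state_def pos_def by (auto simp: nth_list_update)

lemma round_state_not_capture:
  assumes len: "length (fst s) = N" and m: "m \<in> {1..N-1}" and z: "z \<noteq> y"
    and free: "\<forall>j\<in>{1..N-1}. pos s j \<noteq> y"
  shows "\<not> is_capture N (round_state N m s y z i)"
proof
  assume "is_capture N (round_state N m s y z i)"
  then obtain j where "j \<in> {1..N-1}" "pos (round_state N m s y z i) j = pos (round_state N m s y z i) N"
    unfolding is_capture_def by blast
  then show False
    using pos_round_state[OF len m] m z free by (auto split: if_splits)
qed

lemma round_state_step:
  assumes len: "length (fst s) = N" and m: "m \<in> {1..N-1}" and far: "y \<notin> cnbhd E (pos s m)"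
    and free: "\<forall>j\<in>{1..N-1}. pos s j \<noteq> y" and i: "1 \<le> i" "i < N"
    and z: "z \<in> cnbhd E (pos s m)" "i \<le> m \<Longrightarrow> z = pos s m"
    and A: "round_state N m s y z i \<in> attractor E N {m} k"
  shows "\<exists>z'\<in>cnbhd E (pos s m). (Suc i \<le> m \<longrightarrow> z' = pos s m) \<and>
           round_state N m s y z' (Suc i) \<in> attractor E N {m} (k - 1)"
proof -
  let ?q = "round_state N m s y z i"
  have "z \<noteq> y"
    using z(1) far by auto
  then have nc: "\<not> is_capture N ?q"
    using round_state_not_capture[OF len m _ free] by blast
  then obtain k' where k': "k = Suc k'"
    using attractor_not_capture[OF A] gr0_implies_Suc by blast
  have turn: "turn ?q = i" and nxt: "nxt N i = Suc i"
    using i unfolding round_state_def turn_def nxt_def by simp_all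
  show ?thesis
  proof (cases "i = m")
    case True
    then obtain z' where z': "z' \<in> cnbhd E (pos ?q i)" "move N ?q z' \<in> attractor E N {m} k'"
      using attractor_coalition_move[OF A[unfolded k'] nc] turn by auto
    have "1 \<le> m" "m \<le> N"
      using m by auto
    then have "pos ?q i = pos s m"
      using True z(2) pos_round_state[OF len m, of m] by simp
    moreover have "move N ?q z' = round_state N m s y z' (Suc i)"
      using True turn nxt unfolding move_def round_state_def by simp
    ultimately show ?thesis
      using z' True k' by auto
  next
    case False
    have "move N ?q (pos ?q i) \<in> attractor E N {m} k'"
      using attractor_opponent_move[OF A[unfolded k'] nc] turn False by simp
    moreover have "move N ?q (pos ?q i) = round_state N m s y z (Suc i)"
      using turn nxt unfolding move_def pos_def round_state_def by simp
    moreover have "Suc i \<le> m \<longrightarrow> z = pos s m"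
      using z(2) by simp
    ultimately show ?thesis
      using z(1) k' by auto
  qed
qed

lemma round_state_attractor:
  assumes len: "length (fst s) = N" and m: "m \<in> {1..N-1}" and far: "y \<notin> cnbhd E (pos s m)"
    and free: "\<forall>j\<in>{1..N-1}. pos s j \<noteq> y"
    and start: "round_state N m s y (pos s m) 1 \<in> attractor E N {m} (n - 1)"
    and i: "1 \<le> i" "i \<le> N"
  shows "\<exists>z\<in>cnbhd E (pos s m). (i \<le> m \<longrightarrow> z = pos s m) \<and>
           round_state N m s y z i \<in> attractor E N {m} (n - i)"
  using i
proof (induction i)
  case (Suc i)
  show ?case
  proof (cases "i = 0")
    case False
    then obtain z where z: "z \<in> cnbhd E (pos s m)" "i \<le> m \<longrightarrow> z = pos s m"
      "round_state N m s y z i \<in> attractor E N {m} (n - i)"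
      using Suc by auto
    have "1 \<le> i" "i < N"
      using Suc.prems False by auto
    then show ?thesis
      using round_state_step[OF len m far free _ _ z(1) _ z(3)] z(2) by (simp add: diff_Suc)
  qed (use start in auto)
qed simp

lemma move_robber_round_state:
  assumes "length (fst s) = N" "m \<in> {1..N-1}" "turn s = N"
  shows "move N s y = round_state N m s y (pos s m) 1"
proof -
  have "m - 1 \<noteq> N - 1"
    using assms(2) by auto
  then have "(fst s)[N - 1 := y] ! (m - 1) = fst s ! (m - 1)"
    using assms(1) by simp
  then have "((fst s)[N - 1 := y])[m - 1 := fst s ! (m - 1)] = (fst s)[N - 1 := y]"
    by (metis list_update_id)
  then show ?thesis
    using assms(3) unfolding move_def round_state_def pos_def nxt_def by simp
qed

lemma round_state_in_S:
  assumes G: "simple_conn_graph V E" and v: "valid_state V N s" and N2: "2 \<le> N"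
    and m: "m \<in> {1..N-1}" and y: "y \<in> cnbhd E (pos s N)" and z: "z \<in> cnbhd E (pos s m)"
    and zy: "z \<noteq> y" and free: "\<forall>j\<in>{1..N-1}. pos s j \<noteq> y"
  shows "round_state N m s y z N \<in> S_turn V N N \<inter> S_nc V N"
proof -
  have len: "length (fst s) = N"
    using v unfolding valid_state_def by simp
  have "pos s m \<in> V" "pos s N \<in> V"
    using valid_state_pos[OF v] m N2 by auto
  then have "z \<in> V" "y \<in> V"
    using cnbhd_subset_V[OF G] z y by blast+
  have "set (((fst s)[N - 1 := y])[m - 1 := z]) \<subseteq> insert z (set ((fst s)[N - 1 := y]))"
    by (rule set_update_subset_insert)
  also have "\<dots> \<subseteq> insert z (insert y (set (fst s)))"
    using set_update_subset_insert by fast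
  finally have "valid_state V N (round_state N m s y z N)"
    using v N2 \<open>z \<in> V\<close> \<open>y \<in> V\<close> unfolding valid_state_def round_state_def by auto
  moreover have "\<not> is_capture N (round_state N m s y z N)"
    using round_state_not_capture[OF len m zy free] .
  ultimately show ?thesis
    unfolding S_turn_def S_nc_def round_state_def turn_def by auto
qed

text \<open>Only cop m belongs to the coalition, so a round in which the robber moves to y and the other
  cops stand still stays in its attractor.\<close>

lemma attractor_robber_round:
  assumes G: "simple_conn_graph V E" and N2: "2 \<le> N" and m: "m \<in> {1..N-1}"
    and v: "valid_state V N s" and turn: "turn s = N" and nc: "\<not> is_capture N s"
    and A: "s \<in> attractor E N {m} n" and y: "y \<in> cnbhd E (pos s N)"
    and far: "y \<notin> cnbhd E (pos s m)" and free: "\<forall>j\<in>{1..N-1}. pos s j \<noteq> y"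
  shows "\<exists>q\<in>attractor E N {m} (n - N). q \<in> S_turn V N N \<inter> S_nc V N \<and> pos q N = y"
proof -
  have len: "length (fst s) = N"
    using v unfolding valid_state_def by simp
  obtain n' where n': "n = Suc n'"
    using attractor_not_capture[OF A nc] gr0_implies_Suc by blast
  have "turn s \<notin> {m}" and y': "y \<in> cnbhd E (pos s (turn s))"
    using turn m y by auto
  then have "round_state N m s y (pos s m) 1 \<in> attractor E N {m} (n - 1)"
    using attractor_opponent_move[OF A[unfolded n'] nc _ y'] move_robber_round_state[OF len m turn]
      n' by simp
  then obtain z where z: "z \<in> cnbhd E (pos s m)" "round_state N m s y z N \<in> attractor E N {m} (n - N)"
    using round_state_attractor[OF len m far free, of n N] N2 by auto
  moreover have "z \<noteq> y"
    using z(1) far by auto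
  moreover have "pos (round_state N m s y z N) N = y"
    using pos_round_state[OF len m, of N] m N2 by auto
  ultimately show ?thesis
    using round_state_in_S[OF G v N2 m y] free by blast
qed

lemma trap_configI:
  assumes turn: "turn s = N" and nc: "\<not> is_capture N s" and m: "m \<in> {1..N-1}"
    and non_leaf: "\<not> is_leaf E (pos s N)"
    and cover: "\<forall>y\<in>cnbhd E (pos s N). y \<in> cnbhd E (pos s m) \<or> (\<exists>j\<in>{1..N-1}. pos s j = y) \<or> is_leaf E y"
  shows "trap_config E N m s"
proof -
  have free: "\<not> (\<exists>j\<in>{1..N-1}. pos s j = pos s N)"
    using nc unfolding is_capture_def .
  then have "pos s N \<in> cnbhd E (pos s m)"
    using cover[rule_format, OF cnbhd_self] non_leaf by simp
  moreover have "pos s m \<noteq> pos s N"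
    using free m by auto
  ultimately have "E (pos s m) (pos s N)"
    unfolding cnbhd_def by auto
  then show ?thesis
    using turn cover unfolding trap_config_def by simp
qed

lemma attractor_reaches_trap:
  assumes G: "simple_conn_graph V E" and N2: "2 \<le> N" and m: "m \<in> {1..N-1}"
    and s: "s \<in> S_turn V N N \<inter> S_nc V N" "\<not> is_leaf E (pos s N)" "s \<in> attractor E N {m} n"
  shows "\<exists>s'. s' \<in> S_turn V N N \<inter> S_nc V N \<and> \<not> is_leaf E (pos s' N) \<and> trap_config E N m s'"
  using s
proof (induction n arbitrary: s rule: less_induct)
  case (less n)
  have v: "valid_state V N s" and turn: "turn s = N" and nc: "\<not> is_capture N s"
    using less.prems(1) unfolding S_turn_def S_nc_def by auto
  show ?case
  proof (cases "\<forall>y\<in>cnbhd E (pos s N). y \<in> cnbhd E (pos s m) \<or> (\<exists>j\<in>{1..N-1}. pos s j = y) \<or> is_leaf E y")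
    case True
    then show ?thesis
      using trap_configI[OF turn nc m less.prems(2)] less.prems(1,2) by blast
  next
    case False
    then obtain y where y: "y \<in> cnbhd E (pos s N)" "y \<notin> cnbhd E (pos s m)"
      "\<forall>j\<in>{1..N-1}. pos s j \<noteq> y" "\<not> is_leaf E y"
      by blast
    then obtain q where q: "q \<in> attractor E N {m} (n - N)" "q \<in> S_turn V N N \<inter> S_nc V N" "pos q N = y"
      using attractor_robber_round[OF G N2 m v turn nc less.prems(3)] by blast
    have "0 < n"
      using attractor_not_capture[OF less.prems(3) nc] .
    then have "n - N < n"
      using N2 by simp
    then show ?thesis
      using less.IH[OF _ q(2)] q(1,3) y(4) by blast
  qed
qed

definition config_state :: "nat \<Rightarrow> nat \<Rightarrow> 'v \<Rightarrow> 'v \<Rightarrow> 'v \<Rightarrow> 'v state" where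
  "config_state N m w u v = (map (\<lambda>i. if i = m - 1 then w else if i = N - 1 then u else v) [0..<N], N)"

lemma pos_config_state:
  assumes "m \<in> {1..N-1}"
  shows "pos (config_state N m w u v) m = w" and "pos (config_state N m w u v) N = u"
    and "1 \<le> i \<Longrightarrow> i < N \<Longrightarrow> i \<noteq> m \<Longrightarrow> pos (config_state N m w u v) i = v"
  using assms unfolding config_state_def pos_def by auto

lemma turn_config_state: "turn (config_state N m w u v) = N"
  unfolding config_state_def turn_def by simp

lemma config_state_in_S:
  assumes "m \<in> {1..N-1}" "w \<in> V" "u \<in> V" "v \<in> V" "w \<noteq> u" "v \<noteq> u"
  shows "config_state N m w u v \<in> S_turn V N N \<inter> S_nc V N"
proof -
  have "pos (config_state N m w u v) i \<noteq> pos (config_state N m w u v) N" if "i \<in> {1..N-1}" for i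
  proof -
    have "1 \<le> i" "i < N"
      using that by auto
    then show ?thesis
      using pos_config_state(1,2)[OF assms(1), of w u v] pos_config_state(3)[OF assms(1), of i w u v]
        assms(5,6) by (cases "i = m") auto
  qed
  then have "\<not> is_capture N (config_state N m w u v)"
    unfolding is_capture_def by blast
  moreover have "valid_state V N (config_state N m w u v)"
    using assms unfolding config_state_def valid_state_def by auto
  ultimately show ?thesis
    unfolding S_turn_def S_nc_def using turn_config_state[of N m w u v] by simp
qed

lemma trap_config_config_state:
  assumes trap: "trap_config E N m s" and nc: "\<not> is_capture N s" and m: "m \<in> {1..N-1}"
    and alone: "\<forall>j\<in>{1..N-1}. E (pos s N) (pos s j) \<longrightarrow> pos s j = pos s m"
  shows "trap_config E N m (config_state N m (pos s m) (pos s N) v)"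
proof -
  let ?u = "pos s N" and ?w = "pos s m"
  have cover: "y \<in> cnbhd E ?w \<or> is_leaf E y" if y: "y \<in> cnbhd E ?u" for y
  proof -
    have "y \<in> cnbhd E ?w" if "i \<in> {1..N-1}" "pos s i = y" for i
    proof -
      have "y \<noteq> ?u"
        using that nc unfolding is_capture_def by auto
      then show ?thesis
        using y that alone unfolding cnbhd_def by auto
    qed
    then show ?thesis
      using trap y unfolding trap_config_def by auto
  qed
  have "E ?w ?u"
    using trap unfolding trap_config_def by simp
  then show ?thesis
    unfolding trap_config_def pos_config_state(1,2)[OF m] using turn_config_state
    by (auto dest: cover)
qed

text \<open>A trap at a non-leaf u leaves a second neighbour of u; a cop there (already present, or
  placed there in a modified state, which needs N \<ge> 3) contradicts the sure-capture property.\<close>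

lemma trap_at_non_leaf_not_G3:
  assumes G: "simple_conn_graph V E" and N3: "3 \<le> N" and \<gamma>: "0 < \<gamma>" "\<gamma> < 1"
    and G3: "in_G3 V E N \<gamma>" and m: "m \<in> {1..N-1}" and s: "s \<in> S_turn V N N \<inter> S_nc V N"
    and trap: "trap_config E N m s" and non_leaf: "\<not> is_leaf E (pos s N)"
  shows False
proof -
  let ?u = "pos s N" and ?w = "pos s m"
  have N2: "2 \<le> N"
    using N3 by simp
  have v: "valid_state V N s" and nc: "\<not> is_capture N s"
    using s unfolding S_turn_def S_nc_def by auto
  have w_u: "E ?w ?u"
    using trap unfolding trap_config_def by simp
  obtain v' where v': "E ?u v'" "v' \<noteq> ?w"
    using non_leaf_second_neighbour[OF non_leaf simple_conn_graph_sym[OF G w_u]] by blast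
  show False
  proof (cases "\<exists>j\<in>{1..N-1}. E ?u (pos s j) \<and> pos s j \<noteq> ?w")
    case True
    then obtain j where "j \<in> {1..N-1}" "E ?u (pos s j)" "pos s j \<noteq> ?w"
      by blast
    then show False
      using trap_with_second_neighbour_cop_not_G3[OF G N2 \<gamma> G3 m v nc trap] by blast
  next
    case False
    define s' where "s' = config_state N m ?w ?u v'"
    define j where "j = (if m = 1 then 2 else (1::nat))"
    have j: "j \<in> {1..N-1}" "j \<noteq> m"
      using N3 m unfolding j_def by auto
    have "1 \<le> j" "j < N"
      using j by auto
    then have pos': "pos s' m = ?w" "pos s' N = ?u" "pos s' j = v'"
      using pos_config_state[OF m] j(2) unfolding s'_def by auto
    have "?w \<in> V" "?u \<in> V" "v' \<in> V"
      using simple_conn_graph_edge_in_V[OF G w_u] simple_conn_graph_edge_in_V[OF G v'(1)] by simp_all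
    moreover have "?w \<noteq> ?u" "v' \<noteq> ?u"
      using simple_conn_graph_irrefl[OF G w_u] simple_conn_graph_irrefl[OF G v'(1)] by simp_all
    ultimately have "s' \<in> S_turn V N N \<inter> S_nc V N"
      unfolding s'_def by (rule config_state_in_S[OF m])
    then have "valid_state V N s'" and "\<not> is_capture N s'"
      unfolding S_turn_def S_nc_def by auto
    moreover have "trap_config E N m s'"
      unfolding s'_def using trap_config_config_state[OF trap nc m] False by blast
    moreover have "E (pos s' N) (pos s' j)" "pos s' j \<noteq> pos s' m"
      using pos' v' by simp_all
    ultimately show False
      using trap_with_second_neighbour_cop_not_G3[OF G N2 \<gamma> G3 m _ _ _ j(1)] by blast
  qed
qed

lemma single_cop_forces:
  assumes G1': "in_G1' V E N" and s: "s \<in> S_nc V N" and finite: "state_cop_num V E N s \<noteq> \<infinity>"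
  shows "\<exists>m\<in>{1..N-1}. can_force V E N s {m}"
proof -
  have ex: "\<exists>k. k_cops_force V E N s k"
    using finite unfolding state_cop_num_def by (auto split: if_splits)
  define k where "k = (LEAST k. k_cops_force V E N s k)"
  have k: "k_cops_force V E N s k"
    using LeastI_ex[OF ex] unfolding k_def .
  have "state_cop_num V E N s = enat k"
    using ex unfolding state_cop_num_def k_def by simp
  then have "k \<notin> {2..N-1}"
    using G1' s unfolding in_G1'_def in_G1_def by blast
  moreover have "k \<in> {1..N-1}"
    using k unfolding k_cops_force_def by blast
  ultimately obtain K where "K \<subseteq> {1..N-1}" "card K = 1" "can_force V E N s K"
    using k unfolding k_cops_force_def by fastforce
  then show ?thesis
    by (metis card_1_singletonE insert_subset)
qed

lemma state_cop_num_infinite_at_non_leaf: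
  assumes G: "simple_conn_graph V E" and N3: "3 \<le> N" and \<gamma>: "0 < \<gamma>" "\<gamma> < 1"
    and G3: "in_G3 V E N \<gamma>" and s: "s \<in> S_turn V N N \<inter> S_nc V N"
    and non_leaf: "\<not> is_leaf E (pos s N)"
  shows "state_cop_num V E N s = \<infinity>"
proof (rule ccontr)
  assume "state_cop_num V E N s \<noteq> \<infinity>"
  moreover have "in_G1' V E N"
    using G3 unfolding in_G3_def in_G2'_def by blast
  ultimately obtain m where m: "m \<in> {1..N-1}" "can_force V E N s {m}"
    using single_cop_forces s by blast
  then obtain n where n: "s \<in> attractor E N {m} n"
    using can_force_in_forcing_region finite_cnbhd[OF G] unfolding forcing_region_def by blast
  have N2: "2 \<le> N"
    using N3 by simp
  obtain s' where "s' \<in> S_turn V N N \<inter> S_nc V N" "\<not> is_leaf E (pos s' N)" "trap_config E N m s'"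
    using attractor_reaches_trap[OF G N2 m(1) s non_leaf n] by blast
  then show False
    using trap_at_non_leaf_not_G3[OF G N3 \<gamma> G3 m(1)] by blast
qed

lemma state_cop_num_1_at_leaf:
  assumes G: "simple_conn_graph V E" and N2: "2 \<le> N" and u: "u \<in> V" and leaf: "is_leaf E u"
  shows "\<exists>s\<in>S_turn V N N \<inter> S_nc V N. pos s N = u \<and> state_cop_num V E N s = 1"
proof -
  obtain w where u_w: "E u w" and nbhd: "cnbhd E u = {u, w}"
    using leaf_neighbour[OF leaf] by blast
  have w_u: "E w u"
    using simple_conn_graph_sym[OF G u_w] .
  have m: "(1::nat) \<in> {1..N-1}"
    using N2 by simp
  define s where "s = config_state N 1 w u w"
  have "w \<in> V" "w \<noteq> u"
    using simple_conn_graph_edge_in_V[OF G u_w] simple_conn_graph_irrefl[OF G w_u] by auto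
  then have s: "s \<in> S_turn V N N \<inter> S_nc V N"
    unfolding s_def using config_state_in_S[OF m _ u] by blast
  have pos: "pos s 1 = w" "pos s N = u"
    using pos_config_state[OF m] unfolding s_def by auto
  have "\<forall>y\<in>cnbhd E u. y \<in> cnbhd E w"
    using nbhd w_u unfolding cnbhd_def by auto
  then have "trap_config E N 1 s"
    unfolding trap_config_def using pos w_u turn_config_state s_def by simp
  moreover have "valid_state V N s"
    using s unfolding S_turn_def by blast
  ultimately have "state_cop_num V E N s = 1"
    using state_cop_num_eq_1[OF can_force_trap[OF G N2 m] m] by blast
  then show ?thesis
    using s pos by blast
qed

theorem mainTheorem15:
  fixes V :: "'v set" and E :: "'v \<Rightarrow> 'v \<Rightarrow> bool" and N :: nat and \<gamma> :: real and u :: 'v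
  assumes "simple_conn_graph V E"
    and "N \<ge> 3"
    and "0 < \<gamma>" and "\<gamma> < 1"
    and "in_G3 V E N \<gamma>"
    and "u \<in> V"
  shows "\<not> is_leaf E u \<longleftrightarrow>
           (\<forall>s \<in> S_turn V N N \<inter> S_nc V N. pos s N = u \<longrightarrow> state_cop_num V E N s = \<infinity>)"
proof
  assume "\<not> is_leaf E u"
  then show "\<forall>s \<in> S_turn V N N \<inter> S_nc V N. pos s N = u \<longrightarrow> state_cop_num V E N s = \<infinity>"
    using state_cop_num_infinite_at_non_leaf[OF assms(1-5)] by blast
next
  assume infinite: "\<forall>s \<in> S_turn V N N \<inter> S_nc V N. pos s N = u \<longrightarrow> state_cop_num V E N s = \<infinity>"
  show "\<not> is_leaf E u"
  proof
    assume leaf: "is_leaf E u"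
    have "2 \<le> N"
      using assms(2) by simp
    then obtain s where "s \<in> S_turn V N N \<inter> S_nc V N" "pos s N = u" "state_cop_num V E N s = 1"
      using state_cop_num_1_at_leaf[OF assms(1) _ assms(6) leaf] by blast
    then show False
      using infinite by (simp add: one_enat_def)
  qed
qed

end
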